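(* Let $\Gamma$ be an absolutely irreducible finite group, $\theta:\Gamma\to O(\mathbb{R}^d)$ a point group, and $m_\rho$ the multiplicity of $\rho\in\tilde\Gamma$ in $\theta$. Let $f:\mathcal{C}_\theta(V)\to\mathcal{K}_{+,\Gamma}$, $q\mapsto\Psi(Q^\top Q)$, where $Q^\top Q$ is the Gram matrix of $q$. Then \[f(\mathcal{C}_\theta(V))=\{X\in\mathcal{K}_{+,\Gamma}:\operatorname{rank}X_\rho\leq m_\rho\ (\rho\in\tilde\Gamma)\}.\]
   Context: $\Gamma$ is absolutely irreducible if every real irreducible representation remains irreducible over $\mathbb{C}$. $\tilde\Gamma$ is a set of representatives of equivalence classes of real irreducible representations, each chosen as an orthogonal matrix representation $\rho:\Gamma\to O(\mathbb{R}^{d_\rho})$, $\mathrm{tri}$ the trivial one. $\hat V$ is a finite set with $\hat n$ elements, $V=\Gamma\times\hat V$, and $\mathbb{R}^V$ is identified with $\mathbb{R}^\Gamma\otimes\mathbb{R}^{\hat V}$. The right regular representation is $R(\gamma)=\sum_{\alpha\in\Gamma}\mathbf{e}_\alpha\mathbf{e}_{\alpha\gamma}^\top$. Let $Z\in O(\mathbb{R}^\Gamma)$ be an orthogonal matrix with $Z^\top R(\gamma)Z=\bigoplus_{\rho\in\tilde\Gamma}I_{d_\rho}\otimes\rho(\gamma)$ for all $\gamma$ (trivial block first), and $\Psi(X)=(Z\otimes I_{\hat n})^\top X(Z\otimes I_{\hat n})$. $(\mathcal{L}^V)^\Gamma_+$ is the set of positive semidefinite symmetric $V\times V$ matrices $L$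 with $L\mathbf{1}_V=\mathbf{0}$ and $L[(\alpha,u),(\beta,v)]=L[(\gamma\alpha,u),(\gamma\beta,v)]$ for all $\alpha,\beta,\gamma,u,v$; $\mathcal{K}_{+,\Gamma}=\Psi((\mathcal{L}^V)^\Gamma_+)$. Every $X\in\mathcal{K}_{+,\Gamma}$ has the form $X=\bigoplus_{\rho\in\tilde\Gamma}I_{d_\rho}\otimes X_\rho$ with $X_\rho$ a $d_\rho\hat n\times d_\rho\hat n$ matrix; this defines $X_\rho$. A configuration $q:V\to\mathbb{R}^d$ is compatible with $\theta$ if $\theta(\gamma)q_{(\alpha,v)}=q_{(\gamma\alpha,v)}$ for all $\gamma,\alpha\in\Gamma$, $v\in\hat V$; $\mathcal{C}_\theta(V)$ is the set of compatible $q$ with $\sum_{i\in V}q_i=\mathbf{0}$. $Q$ is the $d\times|V|$ matrix with columns $q_i$ (indexed consistently with $\mathbb{R}^\Gamma\otimes\mathbb{R}^{\hat V}$). $m_\rho$ is the number of copies of $\rho$ in a decomposition of the representation $\theta$ into real irreducible representations. *)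

theory Defs
  imports "HOL-Analysis.Analysis"
begin

section \<open>Matrix representations over a field (matrices as functions nat => nat => 'a, indices < n)\<close>

definition vecs :: "nat \<Rightarrow> (nat \<Rightarrow> 'a::field) set" where
  "vecs n = {x. \<forall>i\<ge>n. x i = 0}"

definition mvec :: "nat \<Rightarrow> (nat \<Rightarrow> nat \<Rightarrow> 'a::field) \<Rightarrow> (nat \<Rightarrow> 'a) \<Rightarrow> nat \<Rightarrow> 'a" where
  "mvec n M x = (\<lambda>i. if i < n then (\<Sum>j<n. M i j * x j) else 0)"

definition is_lsubspace :: "nat \<Rightarrow> (nat \<Rightarrow> 'a::field) set \<Rightarrow> bool" where
  "is_lsubspace n S \<longleftrightarrow> S \<subseteq> vecs n \<and> (\<lambda>_. 0) \<in> S \<and>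
     (\<forall>x\<in>S. \<forall>y\<in>S. (\<lambda>i. x i + y i) \<in> S) \<and> (\<forall>c. \<forall>x\<in>S. (\<lambda>i. c * x i) \<in> S)"

text \<open>A representation of the group (written additively, not necessarily commutative)
  by n x n matrices: a group homomorphism into GL_n.\<close>
definition is_rep :: "nat \<Rightarrow> ('g::group_add \<Rightarrow> nat \<Rightarrow> nat \<Rightarrow> 'a::field) \<Rightarrow> bool" where
  "is_rep n \<sigma> \<longleftrightarrow>
     (\<forall>\<gamma> \<delta>. \<forall>i<n. \<forall>j<n. \<sigma> (\<gamma> + \<delta>) i j = (\<Sum>k<n. \<sigma> \<gamma> i k * \<sigma> \<delta> k j)) \<and>
     (\<forall>i<n. \<forall>j<n. \<sigma> 0 i j = (if i = j then 1 else 0))"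

definition rep_irreducible :: "nat \<Rightarrow> ('g \<Rightarrow> nat \<Rightarrow> nat \<Rightarrow> 'a::field) \<Rightarrow> bool" where
  "rep_irreducible n \<sigma> \<longleftrightarrow> 0 < n \<and>
     (\<forall>S. is_lsubspace n S \<and> (\<forall>\<gamma>. \<forall>x\<in>S. mvec n (\<sigma> \<gamma>) x \<in> S)
          \<longrightarrow> S = {\<lambda>_. 0} \<or> S = vecs n)"

definition rep_equiv :: "nat \<Rightarrow> ('g \<Rightarrow> nat \<Rightarrow> nat \<Rightarrow> 'a::field) \<Rightarrow> nat \<Rightarrow> ('g \<Rightarrow> nat \<Rightarrow> nat \<Rightarrow> 'a) \<Rightarrow> bool" where
  "rep_equiv n \<sigma> m \<tau> \<longleftrightarrow> n = m \<and>
     (\<exists>T S. (\<forall>i<n. \<forall>j<n. (\<Sum>k<n. T i k * S k j) = (if i = j then 1 else 0)) \<and>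
            (\<forall>i<n. \<forall>j<n. (\<Sum>k<n. S i k * T k j) = (if i = j then 1 else 0)) \<and>
            (\<forall>\<gamma>. \<forall>i<n. \<forall>j<n. (\<Sum>k<n. T i k * \<sigma> \<gamma> k j) = (\<Sum>k<n. \<tau> \<gamma> i k * T k j)))"

definition is_orth_rep :: "nat \<Rightarrow> ('g::group_add \<Rightarrow> nat \<Rightarrow> nat \<Rightarrow> real) \<Rightarrow> bool" where
  "is_orth_rep n \<rho> \<longleftrightarrow> is_rep n \<rho> \<and>
     (\<forall>\<gamma>. \<forall>i<n. \<forall>j<n. (\<Sum>k<n. \<rho> \<gamma> k i * \<rho> \<gamma> k j) = (if i = j then 1 else 0))"

definition abs_irred_group :: "'g::group_add itself \<Rightarrow> bool" where
  "abs_irred_group _ \<longleftrightarrow>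
     (\<forall>n (\<sigma> :: 'g \<Rightarrow> nat \<Rightarrow> nat \<Rightarrow> real). is_rep n \<sigma> \<and> rep_irreducible n \<sigma> \<longrightarrow>
        rep_irreducible n (\<lambda>\<gamma> i j. complex_of_real (\<sigma> \<gamma> i j)))"

text \<open>Gamma-tilde: a set of pairs (d_rho, rho), one orthogonal representative for each
  equivalence class of real irreducible representations.\<close>
definition irrep_reps :: "(nat \<times> ('g::group_add \<Rightarrow> nat \<Rightarrow> nat \<Rightarrow> real)) set \<Rightarrow> bool" where
  "irrep_reps Rt \<longleftrightarrow>
     (\<forall>(n, \<rho>)\<in>Rt. is_orth_rep n \<rho> \<and> rep_irreducible n \<rho>) \<and>
     (\<forall>(n, \<rho>)\<in>Rt. \<forall>(m, \<tau>)\<in>Rt. rep_equiv n \<rho> m \<tau> \<longrightarrow> (n, \<rho>) = (m, \<tau>)) \<and>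
     (\<forall>n (\<sigma> :: 'g \<Rightarrow> nat \<Rightarrow> nat \<Rightarrow> real). is_rep n \<sigma> \<and> rep_irreducible n \<sigma> \<longrightarrow>
        (\<exists>(m, \<tau>)\<in>Rt. rep_equiv n \<sigma> m \<tau>))"

definition regR :: "'g::group_add \<Rightarrow> 'g \<Rightarrow> 'g \<Rightarrow> real" where
  "regR \<gamma> \<alpha> \<beta> = (if \<beta> = \<alpha> + \<gamma> then 1 else 0)"

text \<open>Index set of the block diagonal matrix (+)_rho I_{d_rho} (x) rho(gamma):
  triples (rho, a, b) with a, b < d_rho.\<close>
definition blockB :: "(nat \<times> 'f) set \<Rightarrow> ((nat \<times> 'f) \<times> nat \<times> nat) set" where
  "blockB Rt = {(r, a, b). r \<in> Rt \<and> a < fst r \<and> b < fst r}"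

definition blockrep :: "('g \<Rightarrow> ((nat \<times> ('g \<Rightarrow> nat \<Rightarrow> nat \<Rightarrow> real)) \<times> nat \<times> nat)
     \<Rightarrow> ((nat \<times> ('g \<Rightarrow> nat \<Rightarrow> nat \<Rightarrow> real)) \<times> nat \<times> nat) \<Rightarrow> real)" where
  "blockrep \<gamma> \<beta> \<beta>' = (case \<beta> of (r, a, b) \<Rightarrow> case \<beta>' of (r', a', b') \<Rightarrow>
      if r = r' \<and> a = a' then snd r \<gamma> b b' else 0)"

text \<open>Z is an orthogonal matrix with rows indexed by Gamma and columns by blockB Rt,
  such that Z^T R(gamma) Z = (+)_rho I_{d_rho} (x) rho(gamma).\<close>
definition decomp_matrix :: "(nat \<times> ('g::{finite,group_add} \<Rightarrow> nat \<Rightarrow> nat \<Rightarrow> real)) set \<Rightarrow>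
     ('g \<Rightarrow> ((nat \<times> ('g \<Rightarrow> nat \<Rightarrow> nat \<Rightarrow> real)) \<times> nat \<times> nat) \<Rightarrow> real) \<Rightarrow> bool" where
  "decomp_matrix Rt Z \<longleftrightarrow>
     (\<forall>\<alpha> \<alpha>'. (\<Sum>\<beta>\<in>blockB Rt. Z \<alpha> \<beta> * Z \<alpha>' \<beta>) = (if \<alpha> = \<alpha>' then 1 else 0)) \<and>
     (\<forall>\<beta>\<in>blockB Rt. \<forall>\<beta>'\<in>blockB Rt. (\<Sum>\<alpha>\<in>UNIV. Z \<alpha> \<beta> * Z \<alpha> \<beta>') = (if \<beta> = \<beta>' then 1 else 0)) \<and>
     (\<forall>\<gamma>. \<forall>\<beta>\<in>blockB Rt. \<forall>\<beta>'\<in>blockB Rt.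
        (\<Sum>\<alpha>\<in>UNIV. \<Sum>\<alpha>'\<in>UNIV. Z \<alpha> \<beta> * regR \<gamma> \<alpha> \<alpha>' * Z \<alpha>' \<beta>') = blockrep \<gamma> \<beta> \<beta>')"

text \<open>Psi(X) = (Z (x) I)^T X (Z (x) I), written out entrywise.\<close>
definition Psi :: "('g::finite \<Rightarrow> 'b \<Rightarrow> real) \<Rightarrow> ('g \<times> 'v \<Rightarrow> 'g \<times> 'v \<Rightarrow> real) \<Rightarrow> ('b \<times> 'v \<Rightarrow> 'b \<times> 'v \<Rightarrow> real)" where
  "Psi Z X = (\<lambda>(\<beta>1, u) (\<beta>2, w). \<Sum>\<alpha>1\<in>UNIV. \<Sum>\<alpha>2\<in>UNIV. Z \<alpha>1 \<beta>1 * X (\<alpha>1, u) (\<alpha>2, w) * Z \<alpha>2 \<beta>2)"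

definition LapGamma :: "('g::{finite,group_add} \<times> 'v::finite \<Rightarrow> 'g \<times> 'v \<Rightarrow> real) set" where
  "LapGamma = {L. (\<forall>i j. L i j = L j i) \<and>
      (\<forall>x. 0 \<le> (\<Sum>i\<in>UNIV. \<Sum>j\<in>UNIV. x i * L i j * x j)) \<and>
      (\<forall>i. (\<Sum>j\<in>UNIV. L i j) = 0) \<and>
      (\<forall>\<alpha> \<beta> \<gamma> u v. L (\<alpha>, u) (\<beta>, v) = L (\<gamma> + \<alpha>, u) (\<gamma> + \<beta>, v))}"

definition Kset :: "('g::{finite,group_add} \<Rightarrow> 'b \<Rightarrow> real) \<Rightarrow> ('b \<times> 'v::finite \<Rightarrow> 'b \<times> 'v \<Rightarrow> real) set" where
  "Kset Z = Psi Z ` LapGamma"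

text \<open>The block X_rho of X = (+)_rho I_{d_rho} (x) X_rho, indexed by pairs (b, v), b < d_rho.\<close>
definition Xblock :: "((('r \<times> nat \<times> nat) \<times> 'v) \<Rightarrow> (('r \<times> nat \<times> nat) \<times> 'v) \<Rightarrow> real) \<Rightarrow> 'r
     \<Rightarrow> (nat \<times> 'v) \<Rightarrow> (nat \<times> 'v) \<Rightarrow> real" where
  "Xblock X r = (\<lambda>(b, u) (b', w). X ((r, 0, b), u) ((r, 0, b'), w))"

definition mat_rank :: "'i set \<Rightarrow> 'j set \<Rightarrow> ('i \<Rightarrow> 'j \<Rightarrow> real) \<Rightarrow> nat" where
  "mat_rank I J M = Max {card S | S. S \<subseteq> J \<and> finite S \<and>
     (\<forall>c. (\<forall>i\<in>I. (\<Sum>j\<in>S. c j * M i j) = 0) \<longrightarrow> (\<forall>j\<in>S. c j = 0))}"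

definition point_group :: "('g::group_add \<Rightarrow> real^'d^'d) \<Rightarrow> bool" where
  "point_group \<theta> \<longleftrightarrow> (\<forall>\<gamma>. orthogonal_matrix (\<theta> \<gamma>)) \<and> (\<forall>\<gamma> \<delta>. \<theta> (\<gamma> + \<delta>) = \<theta> \<gamma> ** \<theta> \<delta>)"

definition compatible :: "('g::group_add \<Rightarrow> real^'d^'d) \<Rightarrow> ('g \<times> 'v \<Rightarrow> real^'d) \<Rightarrow> bool" where
  "compatible \<theta> q \<longleftrightarrow> (\<forall>\<gamma> \<alpha> v. \<theta> \<gamma> *v q (\<alpha>, v) = q (\<gamma> + \<alpha>, v))"

definition Ctheta :: "('g::{finite,group_add} \<Rightarrow> real^'d^'d) \<Rightarrow> ('g \<times> 'v::finite \<Rightarrow> real^'d) set" where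
  "Ctheta \<theta> = {q. compatible \<theta> q \<and> (\<Sum>i\<in>UNIV. q i) = 0}"

definition gram :: "('i \<Rightarrow> real^'d) \<Rightarrow> 'i \<Rightarrow> 'i \<Rightarrow> real" where
  "gram q = (\<lambda>i j. q i \<bullet> q j)"

definition theta_invariant :: "('g \<Rightarrow> real^'d^'d) \<Rightarrow> (real^'d) set \<Rightarrow> bool" where
  "theta_invariant \<theta> U \<longleftrightarrow> (\<forall>\<gamma>. (\<lambda>x. \<theta> \<gamma> *v x) ` U \<subseteq> U)"

definition irred_decomp :: "('g \<Rightarrow> real^'d^'d) \<Rightarrow> nat \<Rightarrow> (nat \<Rightarrow> (real^'d) set) \<Rightarrow> bool" where
  "irred_decomp \<theta> k W \<longleftrightarrow>
     (\<forall>i<k. subspace (W i) \<and> W i \<noteq> {0} \<and> theta_invariant \<theta> (W i) \<and>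
        (\<forall>U. subspace U \<and> U \<subseteq> W i \<and> theta_invariant \<theta> U \<longrightarrow> U = {0} \<or> U = W i)) \<and>
     (\<forall>x. \<exists>!w. (\<forall>i<k. w i \<in> W i) \<and> (\<forall>i\<ge>k. w i = 0) \<and> x = (\<Sum>i<k. w i))"

definition subrep_equiv :: "('g \<Rightarrow> real^'d^'d) \<Rightarrow> (real^'d) set \<Rightarrow> nat \<times> ('g \<Rightarrow> nat \<Rightarrow> nat \<Rightarrow> real) \<Rightarrow> bool" where
  "subrep_equiv \<theta> W r \<longleftrightarrow> (case r of (n, \<rho>) \<Rightarrow>
     \<exists>T :: nat \<Rightarrow> real^'d. inj_on T {..<n} \<and> independent (T ` {..<n}) \<and> span (T ` {..<n}) = W \<and>
        (\<forall>\<gamma>. \<forall>b<n. \<theta> \<gamma> *v T b = (\<Sum>b'<n. \<rho> \<gamma> b' b *\<^sub>R T b')))"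

definition rep_multiplicity :: "('g \<Rightarrow> real^'d^'d) \<Rightarrow> nat \<Rightarrow> (nat \<Rightarrow> (real^'d) set) \<Rightarrow>
     nat \<times> ('g \<Rightarrow> nat \<Rightarrow> nat \<Rightarrow> real) \<Rightarrow> nat" where
  "rep_multiplicity \<theta> k W r = card {i. i < k \<and> subrep_equiv \<theta> (W i) r}"

end

theory Submission
  imports Defs
begin

text \<open>Let \<open>Y\<close> be the image of a configuration \<open>q\<close> under \<open>Z\<close>, so that \<open>\<Psi>(Q\<^sup>T Q)\<close> is the Gram
  matrix of \<open>Y\<close>. Compatibility of \<open>q\<close> makes the vectors of the block \<open>\<rho>\<close> of \<open>Y\<close> combinations of
  intertwiners from \<open>\<rho>\<close> to \<open>\<theta>\<close>; by Schur's lemma these live in the \<open>\<rho>\<close>-isotypic part of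
  \<open>\<real>\<^sup>d\<close>, which is a sum of \<open>m\<^sub>\<rho>\<close> copies of \<open>\<rho>\<close>, so \<open>rank X\<^sub>\<rho> \<le> m\<^sub>\<rho>\<close>.
  Conversely, a \<open>\<Gamma>\<close>-invariant positive semidefinite \<open>L\<close> is a Gram matrix; when
  \<open>rank X\<^sub>\<rho> \<le> m\<^sub>\<rho>\<close>, the Gram vectors of \<open>X\<^sub>\<rho>\<close> can be carried by \<open>m\<^sub>\<rho>\<close> orthonormal
  copies of \<open>\<rho>\<close> in \<open>\<real>\<^sup>d\<close>, and letting \<open>\<theta>\<close> act on the resulting base points gives a
  configuration with the same Fourier coefficients, hence the same Gram matrix, as \<open>L\<close>.
  Both directions rest on the Schur orthogonality relations, which here come from the
  orthogonality of \<open>Z\<close>: every \<open>\<rho>\<close> occurs \<open>d\<^sub>\<rho>\<close> times in the regular representation, so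
  the coefficient functions of \<open>\<rho>\<close> span the same space as \<open>d\<^sub>\<rho>\<close> columns of \<open>Z\<close>.\<close>

section \<open>Finite sums\<close>

lemma sum_UNIV_uminus: "(\<Sum>\<gamma>\<in>UNIV. f (- \<gamma>)) = (\<Sum>\<gamma>\<in>(UNIV::'g::group_add set). f \<gamma>)"
  by (rule sum.reindex_bij_witness[of _ uminus uminus]) auto

lemma sum_UNIV_add_right: "(\<Sum>\<gamma>\<in>UNIV. f (\<gamma> + \<delta>)) = (\<Sum>\<gamma>\<in>(UNIV::'g::group_add set). f \<gamma>)"
  by (rule sum.reindex_bij_witness[of _ "\<lambda>\<gamma>. \<gamma> + - \<delta>" "\<lambda>\<gamma>. \<gamma> + \<delta>"]) (auto simp: add.assoc)

lemma sum_UNIV_add_left: "(\<Sum>\<gamma>\<in>UNIV. f (\<delta> + \<gamma>)) = (\<Sum>\<gamma>\<in>(UNIV::'g::group_add set). f \<gamma>)"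
  by (rule sum.reindex_bij_witness[of _ "\<lambda>\<gamma>. - \<delta> + \<gamma>" "\<lambda>\<gamma>. \<delta> + \<gamma>"]) (auto simp: add.assoc[symmetric])

lemma sum_swap_inner2: "(\<Sum>g\<in>A. \<Sum>m\<in>M. \<Sum>m'\<in>M'. f g m m') = (\<Sum>m\<in>M. \<Sum>m'\<in>M'. \<Sum>g\<in>A. f g m m')"
  by (subst sum.swap, rule sum.cong, simp, rule sum.swap)

lemma sum_swap_inner3:
  "(\<Sum>a\<in>A. \<Sum>s\<in>S. \<Sum>e\<in>E s. \<Sum>b\<in>B s. f a s e b) = (\<Sum>s\<in>S. \<Sum>e\<in>E s. \<Sum>b\<in>B s. \<Sum>a\<in>A. f a s e b)"
  by (rule trans[OF sum.swap], rule sum.cong[OF refl], rule trans[OF sum.swap],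
      rule sum.cong[OF refl], rule sum.swap)

lemma sum_swap_inner4:
  "(\<Sum>a\<in>A. \<Sum>s\<in>S. \<Sum>e\<in>E s. \<Sum>b\<in>B s. \<Sum>b'\<in>B' s. f a s e b b')
    = (\<Sum>s\<in>S. \<Sum>e\<in>E s. \<Sum>b\<in>B s. \<Sum>b'\<in>B' s. \<Sum>a\<in>A. f a s e b b')"
  by (rule trans[OF sum_swap_inner3], (rule sum.cong[OF refl])+, rule sum.swap)

lemma sum_sum_delta:
  "b < (n::nat) \<Longrightarrow> b' < (m::nat) \<Longrightarrow> (\<Sum>l<n. \<Sum>l'<m. if b = l \<and> b' = l' then f l l' else 0) = f b b'"
proof -
  assume b: "b < n" "b' < m"
  have "(\<Sum>l<n. \<Sum>l'<m. if b = l \<and> b' = l' then f l l' else 0) = (\<Sum>l<n. if b = l then f l b' else 0)"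
  proof (intro sum.cong refl)
    fix l show "(\<Sum>l'<m. if b = l \<and> b' = l' then f l l' else 0) = (if b = l then f l b' else 0)"
      using b by (cases "b = l") simp_all
  qed
  then show ?thesis using b by simp
qed

lemma sum_collapse_diagonal:
  fixes f :: "'r \<Rightarrow> 'e \<Rightarrow> nat \<Rightarrow> real" and R :: "'r set" and n :: "'r \<Rightarrow> nat"
  assumes s: "s \<in> R" "e \<in> E s" and fin: "finite R" "finite (E s)"
  shows "(\<Sum>s'\<in>R. \<Sum>e'\<in>E s'. \<Sum>l<n s'. f s' e' l * (if s = s' \<and> e = e' then g l else 0))
       = (\<Sum>l<n s. f s e l * g l)"
proof -
  have "(\<Sum>s'\<in>R. \<Sum>e'\<in>E s'. \<Sum>l<n s'. f s' e' l * (if s = s' \<and> e = e' then g l else 0))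
      = (\<Sum>s'\<in>R. if s' = s then (\<Sum>e'\<in>E s. \<Sum>l<n s. f s e' l * (if e = e' then g l else 0)) else 0)"
    by (rule sum.cong[OF refl]) auto
  also have "\<dots> = (\<Sum>e'\<in>E s. \<Sum>l<n s. f s e' l * (if e = e' then g l else 0))"
    using s fin by simp
  also have "\<dots> = (\<Sum>e'\<in>E s. if e' = e then (\<Sum>l<n s. f s e l * g l) else 0)"
    by (intro sum.cong refl) auto
  also have "\<dots> = (\<Sum>l<n s. f s e l * g l)" using s fin by simp
  finally show ?thesis .
qed

section \<open>Gram matrices\<close>

lemma inner_span_orthogonal:
  fixes x y :: "'a::real_inner"
  assumes "x \<in> span A" "y \<in> span C" "\<And>a c. a \<in> A \<Longrightarrow> c \<in> C \<Longrightarrow> a \<bullet> c = 0"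
  shows "x \<bullet> y = 0"
proof -
  have "orthogonal c x" if "c \<in> C" for c
    using orthogonal_to_span[OF assms(1), of c] assms(3)[OF _ that]
    by (simp add: orthogonal_def inner_commute)
  then have "orthogonal x y"
    using orthogonal_to_span[OF assms(2), of x] by (simp add: orthogonal_def inner_commute)
  then show ?thesis by (simp add: orthogonal_def)
qed

lemma
  fixes y :: "'j \<Rightarrow> 'a::real_vector"
  assumes S: "finite S" and no_relation: "\<And>c. (\<Sum>j\<in>S. c j *\<^sub>R y j) = 0 \<Longrightarrow> \<forall>j\<in>S. c j = 0"
  shows no_relation_imp_inj_on: "inj_on y S"
    and no_relation_imp_independent: "independent (y ` S)"
proof -
  show inj: "inj_on y S"
  proof (rule inj_onI, rule ccontr)
    fix b b' assume b: "b \<in> S" "b' \<in> S" "y b = y b'" "b \<noteq> b'"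
    let ?c = "\<lambda>j. if j = b then 1 else if j = b' then -1 else (0::real)"
    have "(\<Sum>j\<in>S. ?c j *\<^sub>R y j) = (\<Sum>j\<in>S. (if j = b then y b else 0) - (if j = b' then y b' else 0))"
      by (rule sum.cong) (use b in auto)
    also have "\<dots> = 0" using b S by (simp add: sum_subtractf)
    finally show False using no_relation b by fastforce
  qed
  show "independent (y ` S)"
  proof
    assume "dependent (y ` S)"
    then obtain u where u: "\<exists>v\<in>y ` S. u v \<noteq> 0" "(\<Sum>v\<in>y ` S. u v *\<^sub>R v) = 0"
      using dependent_finite[of "y ` S"] S by auto
    have "(\<Sum>b\<in>S. u (y b) *\<^sub>R y b) = 0"
      using u(2) sum.reindex[OF inj, of "\<lambda>v. u v *\<^sub>R v"] by simp
    then have "\<forall>b\<in>S. u (y b) = 0" by (rule no_relation)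
    then show False using u(1) by auto
  qed
qed

lemma gram_relation_iff:
  fixes y :: "'j \<Rightarrow> 'a::real_inner"
  assumes "S \<subseteq> J"
  shows "(\<forall>i\<in>J. (\<Sum>j\<in>S. c j * (y i \<bullet> y j)) = 0) \<longleftrightarrow> (\<Sum>j\<in>S. c j *\<^sub>R y j) = 0"
proof
  assume c: "\<forall>i\<in>J. (\<Sum>j\<in>S. c j * (y i \<bullet> y j)) = 0"
  define v where "v = (\<Sum>j\<in>S. c j *\<^sub>R y j)"
  have "y i \<bullet> v = 0" if "i \<in> J" for i
    using c that unfolding v_def by (simp add: inner_sum_right)
  then have "v \<bullet> v = 0"
    using assms unfolding v_def by (auto simp: inner_sum_left intro!: sum.neutral)
  then show "(\<Sum>j\<in>S. c j *\<^sub>R y j) = 0" by (simp add: v_def)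
next
  assume "(\<Sum>j\<in>S. c j *\<^sub>R y j) = 0"
  then have "y i \<bullet> (\<Sum>j\<in>S. c j *\<^sub>R y j) = 0" for i by simp
  then show "\<forall>i\<in>J. (\<Sum>j\<in>S. c j * (y i \<bullet> y j)) = 0" by (simp add: inner_sum_right)
qed

lemma mat_rank_gram:
  fixes y :: "'j \<Rightarrow> 'a::euclidean_space"
  assumes J: "finite J"
  shows "mat_rank J J (\<lambda>i j. y i \<bullet> y j) = dim (y ` J)"
proof -
  define SS where "SS = {card S | S. S \<subseteq> J \<and> finite S \<and>
     (\<forall>c. (\<forall>i\<in>J. (\<Sum>j\<in>S. c j * (y i \<bullet> y j)) = 0) \<longrightarrow> (\<forall>j\<in>S. c j = 0))}"
  have "m \<le> dim (y ` J)" if "m \<in> SS" for m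
  proof -
    obtain S where S: "m = card S" "S \<subseteq> J" "finite S"
      and gram_no_relation: "\<And>c. (\<forall>i\<in>J. (\<Sum>j\<in>S. c j * (y i \<bullet> y j)) = 0) \<Longrightarrow> \<forall>j\<in>S. c j = 0"
      using \<open>m \<in> SS\<close> unfolding SS_def by blast
    have no_relation: "\<forall>j\<in>S. c j = 0" if "(\<Sum>j\<in>S. c j *\<^sub>R y j) = 0" for c
      using gram_no_relation gram_relation_iff[OF S(2)] that by blast
    have "card (y ` S) \<le> dim (y ` J)"
      using S(2) no_relation_imp_independent[of S y, OF S(3) no_relation] by (intro independent_card_le_dim) auto
    then show ?thesis using S(1) card_image[OF no_relation_imp_inj_on[of S y, OF S(3) no_relation]] by simp
  qed
  moreover have "dim (y ` J) \<in> SS"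
  proof -
    obtain Bs where Bs: "Bs \<subseteq> y ` J" "independent Bs" "card Bs = dim (y ` J)"
      by (rule basis_exists[of "y ` J"]) blast
    then obtain S where S: "S \<subseteq> J" "inj_on y S" "Bs = y ` S" by (auto simp: subset_image_inj)
    have "\<forall>j\<in>S. c j = 0" if "(\<Sum>j\<in>S. c j *\<^sub>R y j) = 0" for c
    proof -
      have "(\<Sum>b\<in>Bs. c (inv_into S y b) *\<^sub>R b) = 0" using that S by (simp add: sum.reindex)
      moreover have "finite Bs" using Bs(1) J finite_surj by blast
      ultimately have "\<forall>b\<in>Bs. c (inv_into S y b) = 0" using Bs(2) dependent_finite[of Bs] by auto
      then show ?thesis using S by simp
    qed
    then have "(\<forall>i\<in>J. (\<Sum>j\<in>S. c j * (y i \<bullet> y j)) = 0) \<Longrightarrow> \<forall>j\<in>S. c j = 0" for c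
      using gram_relation_iff[OF S(1)] by blast
    then show ?thesis
      unfolding SS_def using S finite_subset[OF S(1) J] Bs(3) card_image[OF S(2)]
      by (auto intro!: exI[of _ S])
  qed
  moreover have "finite SS"
    by (rule finite_subset[of _ "{..card J}"]) (use J in \<open>auto simp: SS_def intro: card_mono\<close>)
  ultimately have "Max SS = dim (y ` J)" by (intro Max_eqI) auto
  then show ?thesis unfolding mat_rank_def SS_def by simp
qed

lemma orthonormal_bases_exist:
  fixes V :: "'r \<Rightarrow> 'a::euclidean_space set"
  shows "\<exists>E. \<forall>r. pairwise orthogonal (E r) \<and> (\<forall>x\<in>E r. norm x = 1) \<and> independent (E r) \<and>
    card (E r) = dim (V r) \<and> span (E r) = span (V r)"
proof -
  have "\<exists>B. pairwise orthogonal B \<and> (\<forall>x\<in>B. norm x = 1) \<and> independent B \<and>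
      card B = dim (V r) \<and> span B = span (V r)" for r
    by (rule orthonormal_basis_subspace[OF subspace_span[of "V r"]]) (auto simp: dim_span)
  then show ?thesis by metis
qed

lemma inner_orthonormal_basis:
  fixes x y :: "'a::euclidean_space"
  assumes "pairwise orthogonal B" "\<And>e. e \<in> B \<Longrightarrow> norm e = 1" "finite B" "y \<in> span B"
  shows "x \<bullet> y = (\<Sum>e\<in>B. (x \<bullet> e) * (y \<bullet> e))"
proof -
  have "y = (\<Sum>e\<in>B. (y \<bullet> e) *\<^sub>R e)"
    using orthonormal_basis_expand[OF assms(1,2,4,3)] by simp
  then have "x \<bullet> y = x \<bullet> (\<Sum>e\<in>B. (y \<bullet> e) *\<^sub>R e)" by (rule arg_cong)
  also have "\<dots> = (\<Sum>e\<in>B. (x \<bullet> e) * (y \<bullet> e))" by (simp add: inner_sum_right mult.commute)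
  finally show ?thesis .
qed

section \<open>Positive semidefinite matrices are Gram matrices\<close>

definition quad_form :: "'i set \<Rightarrow> ('i \<Rightarrow> 'i \<Rightarrow> real) \<Rightarrow> ('i \<Rightarrow> real) \<Rightarrow> real" where
  "quad_form I X x = (\<Sum>i\<in>I. \<Sum>j\<in>I. x i * X i j * x j)"

definition psd_on :: "'i set \<Rightarrow> ('i \<Rightarrow> 'i \<Rightarrow> real) \<Rightarrow> bool" where
  "psd_on I X \<longleftrightarrow> (\<forall>i\<in>I. \<forall>j\<in>I. X i j = X j i) \<and> (\<forall>x. 0 \<le> quad_form I X x)"

lemma quad_form_cong: "(\<And>i. i \<in> I \<Longrightarrow> x i = x' i) \<Longrightarrow> quad_form I X x = quad_form I X x'"
  unfolding quad_form_def by (intro sum.cong) auto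

lemma quad_form_indicator:
  "finite I \<Longrightarrow> j \<in> I \<Longrightarrow> quad_form I X (\<lambda>i. if i = j then 1 else 0) = X j j"
  unfolding quad_form_def
  by (simp add: if_distrib[of "\<lambda>v. v * _"] if_distrib[of "\<lambda>v. _ * v"] cong: if_cong)

lemma quad_form_insert:
  assumes I: "finite I" "a \<notin> I" and sym: "\<And>i. i \<in> I \<Longrightarrow> X i a = X a i"
  shows "quad_form (insert a I) X x = x a * X a a * x a + 2 * x a * (\<Sum>j\<in>I. X a j * x j) + quad_form I X x"
proof -
  have "quad_form (insert a I) X x
      = x a * X a a * x a + (\<Sum>j\<in>I. x a * X a j * x j) + (\<Sum>i\<in>I. x i * X i a * x a) + quad_form I X x"
    unfolding quad_form_def using I by (simp add: sum.distrib algebra_simps)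
  also have "(\<Sum>i\<in>I. x i * X i a * x a) = (\<Sum>j\<in>I. x a * X a j * x j)"
    using sym by (intro sum.cong) auto
  finally show ?thesis by (simp add: sum_distrib_left algebra_simps)
qed

lemma psd_on_insertD:
  assumes I: "finite I" "a \<notin> I" and X: "psd_on (insert a I) X"
  shows "psd_on I X"
  unfolding psd_on_def
proof (intro conjI allI)
  have sym: "\<And>i j. i \<in> insert a I \<Longrightarrow> j \<in> insert a I \<Longrightarrow> X i j = X j i"
    using X unfolding psd_on_def by blast
  then show "\<forall>i\<in>I. \<forall>j\<in>I. X i j = X j i" by blast
  fix x
  let ?x = "x(a := 0 :: real)"
  have "quad_form (insert a I) X ?x = ?x a * X a a * ?x a + 2 * ?x a * (\<Sum>j\<in>I. X a j * ?x j) + quad_form I X ?x"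
    by (rule quad_form_insert) (use I sym in auto)
  also have "\<dots> = quad_form I X ?x" by simp
  also have "\<dots> = quad_form I X x" using I by (intro quad_form_cong) auto
  finally have "quad_form (insert a I) X ?x = quad_form I X x" .
  moreover have "0 \<le> quad_form (insert a I) X ?x" using X unfolding psd_on_def by blast
  ultimately show "0 \<le> quad_form I X x" by simp
qed

lemma psd_on_zero_diag:
  assumes I: "finite I" "a \<notin> I" and X: "psd_on (insert a I) X" and Xaa: "X a a = 0" and j: "j \<in> I"
  shows "X a j = 0"
proof (rule ccontr)
  assume ne: "X a j \<noteq> 0"
  have sym: "\<And>i. i \<in> I \<Longrightarrow> X i a = X a i" using X unfolding psd_on_def by blast
  define t where "t = - (X j j + 1) / (2 * X a j)"
  define x where "x = (\<lambda>i. if i = a then t else if i = j then 1 else (0::real))"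
  have "(\<Sum>j'\<in>I. X a j' * x j') = (\<Sum>j'\<in>I. if j' = j then X a j else 0)"
    by (rule sum.cong) (use I in \<open>auto simp: x_def\<close>)
  moreover have "quad_form I X x = quad_form I X (\<lambda>i. if i = j then 1 else 0)"
    by (rule quad_form_cong) (use I in \<open>auto simp: x_def\<close>)
  ultimately have "(\<Sum>j'\<in>I. X a j' * x j') = X a j" "quad_form I X x = X j j"
    using I j by (simp_all add: quad_form_indicator)
  moreover have "x a = t" by (simp add: x_def)
  moreover have "quad_form (insert a I) X x
      = x a * X a a * x a + 2 * x a * (\<Sum>j'\<in>I. X a j' * x j') + quad_form I X x"
    by (rule quad_form_insert) (use I sym in auto)
  ultimately have "quad_form (insert a I) X x = -1"
    using Xaa ne unfolding t_def by (simp add: field_simps)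
  then show False using X unfolding psd_on_def by (metis neg_0_le_iff_le not_one_le_zero)
qed

lemma psd_on_schur_complement:
  assumes I: "finite I" "a \<notin> I" and X: "psd_on (insert a I) X" and pos: "X a a > 0"
  shows "psd_on I (\<lambda>i j. X i j - X a i * X a j / X a a)"
  unfolding psd_on_def
proof (intro conjI allI ballI)
  have sym: "\<And>i j. i \<in> insert a I \<Longrightarrow> j \<in> insert a I \<Longrightarrow> X i j = X j i"
    using X unfolding psd_on_def by blast
  then show "X i j - X a i * X a j / X a a = X j i - X a j * X a i / X a a" if "i \<in> I" "j \<in> I" for i j
    using that by (simp add: mult.commute)
  fix x
  define s where "s = (\<Sum>j\<in>I. X a j * x j)"
  define t where "t = - s / X a a"
  have "(\<Sum>i\<in>I. \<Sum>j\<in>I. x i * (X a i * X a j / X a a) * x j) = s * s / X a a"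
    unfolding s_def by (simp add: sum_product sum_divide_distrib mult_ac)
  then have "quad_form I (\<lambda>i j. X i j - X a i * X a j / X a a) x = quad_form I X x - s * s / X a a"
    unfolding quad_form_def by (simp add: right_diff_distrib left_diff_distrib sum_subtractf)
  also have "\<dots> = t * X a a * t + 2 * t * s + quad_form I X x"
    using pos unfolding t_def by (simp add: field_simps)
  also have "\<dots> = quad_form (insert a I) X (x(a := t))"
  proof -
    have "quad_form I X (x(a := t)) = quad_form I X x" using I by (intro quad_form_cong) auto
    moreover have "(\<Sum>j\<in>I. X a j * (x(a := t)) j) = s" using I unfolding s_def by (intro sum.cong) auto
    moreover have "X i a = X a i" if "i \<in> I" for i using sym that by blast
    ultimately show ?thesis using quad_form_insert[OF I, of X "x(a := t)"] by simp
  qed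
  also have "0 \<le> \<dots>" using X unfolding psd_on_def by blast
  finally show "0 \<le> quad_form I (\<lambda>i j. X i j - X a i * X a j / X a a) x" .
qed

text \<open>With \<open>x / 0 = 0\<close> the vector \<open>w\<close> is zero when \<open>X a a = 0\<close>; the row of \<open>a\<close> then vanishes
  as well, so the induction below needs no case split.\<close>
lemma psd_on_peel_row:
  assumes I: "finite I" "a \<notin> I" and X: "psd_on (insert a I) X"
  defines "w \<equiv> \<lambda>i. X a i / sqrt (X a a)"
  shows "\<And>j. j \<in> insert a I \<Longrightarrow> X a j = w a * w j"
    and "psd_on I (\<lambda>i j. X i j - w i * w j)"
proof -
  have "0 \<le> quad_form (insert a I) X (\<lambda>i. if i = a then 1 else 0)"
    using X unfolding psd_on_def by blast
  moreover have "quad_form (insert a I) X (\<lambda>i. if i = a then 1 else 0) = X a a"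
    using I by (simp add: quad_form_indicator)
  ultimately have Xaa: "0 \<le> X a a" by simp
  have "sqrt (X a a) * sqrt (X a a) = X a a" using Xaa by simp
  then have w: "w i * w j = X a i * X a j / X a a" for i j
    unfolding w_def times_divide_times_eq by simp
  show "X a j = w a * w j" if "j \<in> insert a I" for j
    using psd_on_zero_diag[OF I X] that by (cases "X a a = 0") (auto simp: w)
  show "psd_on I (\<lambda>i j. X i j - w i * w j)"
    using psd_on_insertD[OF I X] psd_on_schur_complement[OF I X] Xaa
    by (cases "X a a = 0") (auto simp: w)
qed

lemma psd_on_gram:
  assumes "finite I" "psd_on I X"
  shows "\<exists>v. \<forall>i\<in>I. \<forall>j\<in>I. X i j = (\<Sum>k\<in>I. v k i * v k j)"
  using assms
proof (induction I arbitrary: X rule: finite_induct)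
  case empty
  then show ?case by simp
next
  case (insert a I)
  define w where "w = (\<lambda>i. X a i / sqrt (X a a))"
  have row_a: "X a j = w a * w j" if "j \<in> insert a I" for j
    using psd_on_peel_row(1)[OF insert.hyps(1,2) insert.prems that] unfolding w_def .
  obtain v where v: "\<forall>i\<in>I. \<forall>j\<in>I. X i j - w i * w j = (\<Sum>k\<in>I. v k i * v k j)"
    using insert.IH[OF psd_on_peel_row(2)[OF insert.hyps(1,2) insert.prems]] unfolding w_def by blast
  define v' where "v' = (\<lambda>k i. if k = a then w i else if i = a then 0 else v k i)"
  have "X i j = (\<Sum>k\<in>insert a I. v' k i * v' k j)" if "i \<in> insert a I" "j \<in> insert a I" for i j
  proof (cases "i = a \<or> j = a")
    case True
    have "X a i = X i a" using that insert.prems unfolding psd_on_def by blast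
    then have "X i j = w i * w j"
      using True row_a that by (auto simp: mult.commute)
    moreover have "(\<Sum>k\<in>I. v' k i * v' k j) = 0"
      using True insert.hyps by (intro sum.neutral) (auto simp: v'_def)
    ultimately show ?thesis using insert.hyps by (simp add: v'_def)
  next
    case False
    then have "i \<in> I" "j \<in> I" using that by auto
    moreover have "(\<Sum>k\<in>I. v' k i * v' k j) = (\<Sum>k\<in>I. v k i * v k j)"
      using False insert.hyps by (intro sum.cong) (auto simp: v'_def)
    ultimately show ?thesis using v insert.hyps by (simp add: v'_def algebra_simps)
  qed
  then show ?case by blast
qed

section \<open>Schur orthogonality and the map \<open>\<Psi>\<close>\<close>

lemma
  assumes "is_orth_rep n \<rho>" "i < n" "j < n"
  shows orth_rep_add: "\<rho> (\<gamma> + \<delta>) i j = (\<Sum>l<n. \<rho> \<gamma> i l * \<rho> \<delta> l j)"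
    and orth_rep_zero: "\<rho> 0 i j = (if i = j then 1 else 0)"
    and orth_rep_columns: "(\<Sum>l<n. \<rho> \<gamma> l i * \<rho> \<gamma> l j) = (if i = j then 1 else 0)"
  using assms unfolding is_orth_rep_def is_rep_def by blast+

lemma orth_rep_uminus:
  assumes \<rho>: "is_orth_rep n \<rho>" and ij: "i < n" "j < n"
  shows "\<rho> (- \<gamma>) i j = \<rho> \<gamma> j i"
proof -
  have "\<rho> (- \<gamma>) i j = (\<Sum>m<n. if i = m then \<rho> (- \<gamma>) m j else 0)"
    using ij by simp
  also have "\<dots> = (\<Sum>m<n. (\<Sum>l<n. \<rho> \<gamma> l i * \<rho> \<gamma> l m) * \<rho> (- \<gamma>) m j)"
    using ij by (intro sum.cong refl) (simp add: orth_rep_columns[OF \<rho>])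
  also have "\<dots> = (\<Sum>l<n. \<rho> \<gamma> l i * (\<Sum>m<n. \<rho> \<gamma> l m * \<rho> (- \<gamma>) m j))"
    by (simp add: sum_distrib_left sum_distrib_right mult_ac) (rule sum.swap)
  also have "\<dots> = (\<Sum>l<n. \<rho> \<gamma> l i * \<rho> (\<gamma> + - \<gamma>) l j)"
  proof (rule sum.cong[OF refl])
    fix l assume "l \<in> {..<n}"
    then show "\<rho> \<gamma> l i * (\<Sum>m<n. \<rho> \<gamma> l m * \<rho> (- \<gamma>) m j) = \<rho> \<gamma> l i * \<rho> (\<gamma> + - \<gamma>) l j"
      using orth_rep_add[OF \<rho> _ ij(2), of l \<gamma> "- \<gamma>"] by simp
  qed
  also have "\<dots> = (\<Sum>l<n. if l = j then \<rho> \<gamma> l i else 0)"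
    using ij by (intro sum.cong refl) (simp add: orth_rep_zero[OF \<rho>])
  also have "\<dots> = \<rho> \<gamma> j i" using ij by simp
  finally show ?thesis .
qed

lemma orth_rep_rows:
  assumes \<rho>: "is_orth_rep n \<rho>" and ij: "i < n" "j < n"
  shows "(\<Sum>l<n. \<rho> \<gamma> i l * \<rho> \<gamma> j l) = (if i = j then 1 else 0)"
proof -
  have "(\<Sum>l<n. \<rho> \<gamma> i l * \<rho> \<gamma> j l) = (\<Sum>l<n. \<rho> \<gamma> i l * \<rho> (-\<gamma>) l j)"
    using ij by (intro sum.cong refl) (simp add: orth_rep_uminus[OF \<rho>])
  also have "\<dots> = \<rho> (\<gamma> + - \<gamma>) i j" using orth_rep_add[OF \<rho> ij, of \<gamma> "- \<gamma>"] by simp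
  finally show ?thesis using orth_rep_zero[OF \<rho> ij] by simp
qed

lemma rep_irreducible_dim_one: "rep_irreducible 1 (\<sigma> :: 'g \<Rightarrow> nat \<Rightarrow> nat \<Rightarrow> 'a::field)"
  unfolding rep_irreducible_def
proof (intro conjI allI impI)
  fix S :: "(nat \<Rightarrow> 'a) set"
  assume "is_lsubspace 1 S \<and> (\<forall>\<gamma>. \<forall>x\<in>S. mvec 1 (\<sigma> \<gamma>) x \<in> S)"
  then have S: "is_lsubspace 1 S" by blast
  show "S = {\<lambda>_. 0} \<or> S = vecs 1"
  proof (cases "S \<subseteq> {\<lambda>_. 0}")
    case True
    then show ?thesis using S unfolding is_lsubspace_def by auto
  next
    case False
    then obtain x where x: "x \<in> S" "x \<noteq> (\<lambda>_. 0)" by blast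
    have "x \<in> vecs 1" using S x unfolding is_lsubspace_def by auto
    then have x_eq: "x i = (if i = 0 then x 0 else 0)" for i
      unfolding vecs_def by auto
    then have "x 0 \<noteq> 0" using x(2) by (metis ext)
    have "y \<in> S" if "y \<in> vecs 1" for y
    proof -
      have "(\<lambda>i. (y 0 / x 0) * x i) \<in> S" using S x unfolding is_lsubspace_def by blast
      moreover have "(\<lambda>i. (y 0 / x 0) * x i) = y"
        using \<open>x 0 \<noteq> 0\<close> that unfolding vecs_def by (subst x_eq) (auto simp: fun_eq_iff)
      ultimately show ?thesis by simp
    qed
    then show ?thesis using S unfolding is_lsubspace_def by auto
  qed
qed simp

lemma blockrep_simps: "blockrep \<gamma> (r, a, b) (r', a', b') = (if r = r' \<and> a = a' then snd r \<gamma> b b' else 0)"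
  by (simp add: blockrep_def)

definition coeff_vector :: "('g::finite \<Rightarrow> nat \<Rightarrow> nat \<Rightarrow> real) \<Rightarrow> nat \<Rightarrow> nat \<Rightarrow> real^'g" where
  "coeff_vector \<rho> i j = (\<chi> \<gamma>. \<rho> \<gamma> i j)"

lemma inner_coeff_vector: "coeff_vector \<rho> i j \<bullet> coeff_vector \<sigma> i' j' = (\<Sum>\<gamma>\<in>UNIV. \<rho> \<gamma> i j * \<sigma> \<gamma> i' j')"
  by (simp add: coeff_vector_def inner_vec_def)

definition schur_const :: "('g::finite \<Rightarrow> nat \<Rightarrow> nat \<Rightarrow> real) \<Rightarrow> real" where
  "schur_const \<rho> = (\<Sum>\<gamma>\<in>UNIV. \<rho> \<gamma> 0 0 * \<rho> \<gamma> 0 0)"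

definition Psi_config :: "('g::finite \<Rightarrow> 'b \<Rightarrow> real) \<Rightarrow> ('g \<times> 'v \<Rightarrow> real^'d) \<Rightarrow> 'b \<times> 'v \<Rightarrow> real^'d" where
  "Psi_config Z q = (\<lambda>(\<beta>, u). \<Sum>\<alpha>\<in>UNIV. Z \<alpha> \<beta> *\<^sub>R q (\<alpha>, u))"

lemma Psi_apply:
  "Psi Z X (\<beta>1, u) (\<beta>2, w) = (\<Sum>\<alpha>1\<in>UNIV. \<Sum>\<alpha>2\<in>UNIV. Z \<alpha>1 \<beta>1 * X (\<alpha>1, u) (\<alpha>2, w) * Z \<alpha>2 \<beta>2)"
  by (simp add: Psi_def)

lemma Psi_gram: "Psi Z (gram q) = gram (Psi_config Z q)"
proof (intro ext)
  fix i j
  show "Psi Z (gram q) i j = gram (Psi_config Z q) i j"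
    by (cases i; cases j)
      (simp add: Psi_apply gram_def Psi_config_def inner_sum_left inner_sum_right sum_distrib_left mult_ac)
qed

lemma mat_rank_Xblock_gram:
  "mat_rank ({..<n} \<times> UNIV) ({..<n} \<times> UNIV) (Xblock (gram (y :: _ \<Rightarrow> real^'d)) r)
     = dim ((\<lambda>(b, u). y ((r, 0, b), u)) ` ({..<n} \<times> (UNIV :: 'v::finite set)))"
proof -
  have "Xblock (gram y) r = (\<lambda>i j. (\<lambda>(b, u). y ((r, 0, b), u)) i \<bullet> (\<lambda>(b, u). y ((r, 0, b), u)) j)"
    by (simp add: Xblock_def gram_def fun_eq_iff split: prod.splits)
  then show ?thesis by (simp add: mat_rank_gram)
qed

lemma compatible_eq: "compatible \<theta> q \<Longrightarrow> q (\<alpha>, u) = \<theta> \<alpha> *v q (0, u)"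
  unfolding compatible_def by (metis add.right_neutral)

definition translation_invariant :: "('g::group_add \<times> 'v \<Rightarrow> 'g \<times> 'v \<Rightarrow> real) \<Rightarrow> bool" where
  "translation_invariant K \<longleftrightarrow> (\<forall>\<alpha> \<beta> \<gamma> u v. K (\<alpha>, u) (\<beta>, v) = K (\<gamma> + \<alpha>, u) (\<gamma> + \<beta>, v))"

lemma LapGamma_translation_invariant: "L \<in> LapGamma \<Longrightarrow> translation_invariant L"
  unfolding LapGamma_def translation_invariant_def by blast

lemma translation_invariant_shift: "translation_invariant K \<Longrightarrow> K (\<alpha>, u) (\<alpha> + \<gamma>, w) = K (0, u) (\<gamma>, w)"
  unfolding translation_invariant_def by (metis add.assoc add.left_inverse add.right_neutral)

lemma LapGamma_gram:
  assumes L: "L \<in> LapGamma"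
  shows "\<exists>y :: 'g::{finite,group_add} \<times> 'v::finite \<Rightarrow> real^('g \<times> 'v). L = gram y"
proof -
  have "psd_on UNIV L" using L unfolding LapGamma_def psd_on_def quad_form_def by auto
  then obtain v where v: "\<forall>i\<in>UNIV. \<forall>j\<in>UNIV. L i j = (\<Sum>k\<in>(UNIV :: ('g \<times> 'v) set). v k i * v k j)"
    using psd_on_gram[OF finite_class.finite_UNIV] by blast
  have "L = gram (\<lambda>i. \<chi> k. v k i)"
    unfolding gram_def using v by (auto simp: fun_eq_iff inner_vec_def)
  then show ?thesis by blast
qed

lemma gram_row_sums_zero: "(\<And>i. (\<Sum>j\<in>UNIV. gram y i j) = 0) \<Longrightarrow> (\<Sum>i\<in>UNIV. y i) = (0 :: real^'d)"
proof -
  assume "\<And>i. (\<Sum>j\<in>UNIV. gram y i j) = 0"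
  then have "(\<Sum>i\<in>UNIV. y i) \<bullet> (\<Sum>j\<in>UNIV. y j) = 0"
    unfolding gram_def inner_sum_left by (simp add: inner_sum_right)
  then show ?thesis by simp
qed

locale regular_decomposition =
  fixes Rt :: "(nat \<times> ('g::{finite,group_add} \<Rightarrow> nat \<Rightarrow> nat \<Rightarrow> real)) set"
    and Z :: "'g \<Rightarrow> ((nat \<times> ('g \<Rightarrow> nat \<Rightarrow> nat \<Rightarrow> real)) \<times> nat \<times> nat) \<Rightarrow> real"
  assumes irrep_reps: "irrep_reps Rt"
    and decomp_matrix: "decomp_matrix Rt Z"
begin

lemma Rt_orth_rep: "(n, \<rho>) \<in> Rt \<Longrightarrow> is_orth_rep n \<rho>"
  and Rt_irreducible: "(n, \<rho>) \<in> Rt \<Longrightarrow> rep_irreducible n \<rho>"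
  using irrep_reps unfolding irrep_reps_def by fast+

lemma Rt_dim_pos: "(n, \<rho>) \<in> Rt \<Longrightarrow> 0 < n"
  using Rt_irreducible unfolding rep_irreducible_def by blast

lemma blockB_memI: "(n, \<rho>) \<in> Rt \<Longrightarrow> a < n \<Longrightarrow> b < n \<Longrightarrow> ((n, \<rho>), a, b) \<in> blockB Rt"
  by (simp add: blockB_def)

lemma Z_rows_orthonormal: "(\<Sum>\<beta>\<in>blockB Rt. Z \<alpha> \<beta> * Z \<alpha>' \<beta>) = (if \<alpha> = \<alpha>' then 1 else 0)"
  using decomp_matrix unfolding decomp_matrix_def by blast

lemma Z_columns_orthonormal:
  "\<beta> \<in> blockB Rt \<Longrightarrow> \<beta>' \<in> blockB Rt \<Longrightarrow> (\<Sum>\<alpha>\<in>UNIV. Z \<alpha> \<beta> * Z \<alpha> \<beta>') = (if \<beta> = \<beta>' then 1 else 0)"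
  using decomp_matrix unfolding decomp_matrix_def by blast

lemma Z_regular_blockrep:
  assumes "\<beta> \<in> blockB Rt" "\<beta>' \<in> blockB Rt"
  shows "(\<Sum>\<alpha>\<in>UNIV. Z \<alpha> \<beta> * Z (\<alpha> + \<gamma>) \<beta>') = blockrep \<gamma> \<beta> \<beta>'"
proof -
  have "(\<Sum>\<alpha>'\<in>UNIV. Z \<alpha> \<beta> * regR \<gamma> \<alpha> \<alpha>' * Z \<alpha>' \<beta>') = Z \<alpha> \<beta> * Z (\<alpha> + \<gamma>) \<beta>'" for \<alpha>
  proof -
    have "(\<Sum>\<alpha>'\<in>UNIV. Z \<alpha> \<beta> * regR \<gamma> \<alpha> \<alpha>' * Z \<alpha>' \<beta>')
       = (\<Sum>\<alpha>'\<in>UNIV. if \<alpha>' = \<alpha> + \<gamma> then Z \<alpha> \<beta> * Z \<alpha>' \<beta>' else 0)"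
      by (rule sum.cong) (auto simp: regR_def)
    then show ?thesis by simp
  qed
  moreover have "(\<Sum>\<alpha>\<in>UNIV. \<Sum>\<alpha>'\<in>UNIV. Z \<alpha> \<beta> * regR \<gamma> \<alpha> \<alpha>' * Z \<alpha>' \<beta>') = blockrep \<gamma> \<beta> \<beta>'"
    using assms decomp_matrix unfolding decomp_matrix_def by blast
  ultimately show ?thesis by simp
qed

lemma finite_blockB: "finite (blockB Rt)"
proof (rule ccontr)
  assume "infinite (blockB Rt)"
  then show False using Z_rows_orthonormal[of 0 0] by simp
qed

lemma finite_Rt: "finite Rt"
proof (rule finite_subset)
  show "Rt \<subseteq> fst ` blockB Rt"
    using Rt_dim_pos by (force simp: blockB_def image_iff)
qed (use finite_blockB in blast)

lemma Z_translate:
  assumes r: "(n, \<rho>) \<in> Rt" and ab: "a < n" "b < n"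
  shows "Z (\<alpha> + \<gamma>) ((n, \<rho>), a, b) = (\<Sum>b'<n. Z \<alpha> ((n, \<rho>), a, b') * \<rho> \<gamma> b' b)"
proof -
  let ?b = "((n, \<rho>), a, b)"
  have "Z (\<alpha> + \<gamma>) ?b = (\<Sum>\<alpha>'\<in>UNIV. (\<Sum>\<beta>\<in>blockB Rt. Z \<alpha> \<beta> * Z \<alpha>' \<beta>) * Z (\<alpha>' + \<gamma>) ?b)"
    by (simp add: Z_rows_orthonormal if_distrib[of "\<lambda>x. x * _"] cong: if_cong)
  also have "\<dots> = (\<Sum>\<beta>\<in>blockB Rt. Z \<alpha> \<beta> * (\<Sum>\<alpha>'\<in>UNIV. Z \<alpha>' \<beta> * Z (\<alpha>' + \<gamma>) ?b))"
    by (simp add: sum_distrib_left sum_distrib_right mult_ac) (rule sum.swap)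
  also have "\<dots> = (\<Sum>\<beta>\<in>blockB Rt. Z \<alpha> \<beta> * blockrep \<gamma> \<beta> ?b)"
    by (intro sum.cong refl) (simp add: Z_regular_blockrep blockB_memI[OF r ab])
  also have "\<dots> = (\<Sum>\<beta>\<in>(\<lambda>b'. ((n, \<rho>), a, b')) ` {..<n}. Z \<alpha> \<beta> * blockrep \<gamma> \<beta> ?b)"
    by (rule sum.mono_neutral_right[OF finite_blockB])
      (use blockB_memI[OF r] ab in \<open>auto simp: blockrep_def blockB_def image_iff\<close>)
  also have "\<dots> = (\<Sum>b'<n. Z \<alpha> ((n, \<rho>), a, b') * \<rho> \<gamma> b' b)"
    by (subst sum.reindex) (auto simp: inj_on_def blockrep_simps)
  finally show ?thesis .
qed

lemma Z_translate_zero: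
  "(n, \<rho>) \<in> Rt \<Longrightarrow> a < n \<Longrightarrow> b < n \<Longrightarrow> Z \<gamma> ((n, \<rho>), a, b) = (\<Sum>b'<n. Z 0 ((n, \<rho>), a, b') * \<rho> \<gamma> b' b)"
  using Z_translate[of n \<rho> a b 0 \<gamma>] by simp

definition Z_column where
  "Z_column \<beta> = (\<chi> \<gamma>. Z \<gamma> \<beta>)"

lemma inner_Z_column:
  "\<beta> \<in> blockB Rt \<Longrightarrow> \<beta>' \<in> blockB Rt \<Longrightarrow> Z_column \<beta> \<bullet> Z_column \<beta>' = (if \<beta> = \<beta>' then 1 else 0)"
  using Z_columns_orthonormal by (simp add: Z_column_def inner_vec_def)

text \<open>The \<open>n\<close> columns \<open>((n, \<rho>), a, l)\<close>, \<open>a < n\<close>, are orthonormal and lie in the span of the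
  \<open>n\<close> coefficient vectors of column \<open>l\<close> of \<open>\<rho>\<close>, so both families span the same space.\<close>
lemma coeff_vector_in_span:
  assumes r: "(n, \<rho>) \<in> Rt" and kl: "k < n" "l < n"
  shows "coeff_vector \<rho> k l \<in> span ((\<lambda>a. Z_column ((n, \<rho>), a, l)) ` {..<n})"
proof -
  let ?S1 = "(\<lambda>a. Z_column ((n, \<rho>), a, l)) ` {..<n}"
  let ?S2 = "(\<lambda>k. coeff_vector \<rho> k l) ` {..<n}"
  have "Z_column ((n, \<rho>), a, l) \<in> span ?S2" if "a < n" for a
  proof -
    have "Z_column ((n, \<rho>), a, l) = (\<Sum>b'<n. Z 0 ((n, \<rho>), a, b') *\<^sub>R coeff_vector \<rho> b' l)"
      unfolding Z_column_def coeff_vector_def vec_eq_iff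
      using Z_translate_zero[OF r that kl(2)] by (simp add: sum_component)
    also have "\<dots> \<in> span ?S2"
      by (intro span_sum span_mul span_base) auto
    finally show ?thesis .
  qed
  then have S12: "?S1 \<subseteq> span ?S2" by auto
  have orthonormal: "Z_column ((n, \<rho>), a, l) \<bullet> Z_column ((n, \<rho>), a', l) = (if a = a' then 1 else 0)"
    if "a < n" "a' < n" for a a'
    using inner_Z_column blockB_memI[OF r] that kl by simp
  have inj: "inj_on (\<lambda>a. Z_column ((n, \<rho>), a, l)) {..<n}"
  proof (rule inj_onI)
    fix a a' assume a: "a \<in> {..<n}" "a' \<in> {..<n}" "Z_column ((n, \<rho>), a, l) = Z_column ((n, \<rho>), a', l)"
    then have "Z_column ((n, \<rho>), a, l) \<bullet> Z_column ((n, \<rho>), a', l) = 1"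
      using orthonormal[of a' a'] by simp
    then show "a = a'" using orthonormal[of a a'] a by (simp split: if_splits)
  qed
  have ind: "independent ?S1"
    by (rule pairwise_orthogonal_independent)
      (use orthonormal in \<open>fastforce simp: pairwise_def orthogonal_def\<close>)+
  have "dim ?S1 = n"
    using dim_span_eq_card_independent[OF ind] card_image[OF inj] by (simp add: dim_span)
  moreover have "dim (span ?S2) \<le> n"
    using dim_le_card[of ?S2 ?S2] card_image_le[of "{..<n}" "\<lambda>k. coeff_vector \<rho> k l"]
    by (simp add: dim_span span_superset)
  ultimately have "span ?S1 = span (span ?S2)"
    by (intro dim_eq_span[OF S12]) simp
  then show ?thesis using kl by (simp add: span_base)
qed

lemma coeff_sum_orthogonal:
  assumes r: "(n, \<rho>) \<in> Rt" and s: "(m, \<sigma>) \<in> Rt" and ne: "((n, \<rho>), l) \<noteq> ((m, \<sigma>), l')"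
    and kl: "k < n" "l < n" and kl': "k' < m" "l' < m"
  shows "(\<Sum>\<gamma>\<in>UNIV. \<rho> \<gamma> k l * \<sigma> \<gamma> k' l') = 0"
proof -
  have "coeff_vector \<rho> k l \<bullet> coeff_vector \<sigma> k' l' = 0"
    by (rule inner_span_orthogonal[OF coeff_vector_in_span[OF r kl] coeff_vector_in_span[OF s kl']])
      (use inner_Z_column blockB_memI[OF r] blockB_memI[OF s] ne kl kl' in auto)
  then show ?thesis by (simp add: inner_coeff_vector)
qed

lemma coeff_sum_transpose:
  assumes r: "(n, \<rho>) \<in> Rt" and kl: "k < n" "l < n" and kl': "k' < n" "l' < n"
  shows "(\<Sum>\<gamma>\<in>UNIV. \<rho> \<gamma> k l * \<rho> \<gamma> k' l') = (\<Sum>\<gamma>\<in>UNIV. \<rho> \<gamma> l k * \<rho> \<gamma> l' k')"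
  using sum_UNIV_uminus[of "\<lambda>\<gamma>. \<rho> \<gamma> k l * \<rho> \<gamma> k' l'"] orth_rep_uminus[OF Rt_orth_rep[OF r]] kl kl'
  by simp

text \<open>For a fixed row \<open>i\<close>, the matrix \<open>P\<close> of the sums below is invariant under conjugation by
  every \<open>\<rho> \<delta>\<close> (translate the summation variable by \<open>\<delta>\<close>) and is diagonal by orthogonality, so the
  diagonal matrix \<open>P\<close> commutes with \<open>\<rho>\<close>; irreducibility then forces it to be scalar.\<close>
lemma coeff_sum_row_conj:
  assumes r: "(n, \<rho>) \<in> Rt" and i: "i < n" and l: "l < n" "l' < n"
  shows "(\<Sum>\<gamma>\<in>UNIV. \<rho> \<gamma> i l * \<rho> \<gamma> i l') =
     (\<Sum>m<n. (\<Sum>\<gamma>\<in>UNIV. \<rho> \<gamma> i m * \<rho> \<gamma> i m) * \<rho> \<delta> m l * \<rho> \<delta> m l')"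
proof -
  define P where "P = (\<lambda>m m'. (\<Sum>\<gamma>\<in>UNIV. \<rho> \<gamma> i m * \<rho> \<gamma> i m'))"
  have "(\<Sum>\<gamma>\<in>UNIV. \<rho> \<gamma> i l * \<rho> \<gamma> i l') = (\<Sum>\<gamma>\<in>UNIV. \<rho> (\<gamma> + \<delta>) i l * \<rho> (\<gamma> + \<delta>) i l')"
    by (rule sum_UNIV_add_right[symmetric])
  also have "\<dots> = (\<Sum>\<gamma>\<in>UNIV. (\<Sum>m<n. \<rho> \<gamma> i m * \<rho> \<delta> m l) * (\<Sum>m'<n. \<rho> \<gamma> i m' * \<rho> \<delta> m' l'))"
    using orth_rep_add[OF Rt_orth_rep[OF r]] i l by simp
  also have "\<dots> = (\<Sum>\<gamma>\<in>UNIV. \<Sum>m<n. \<Sum>m'<n. (\<rho> \<gamma> i m * \<rho> \<delta> m l) * (\<rho> \<gamma> i m' * \<rho> \<delta> m' l'))"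
    by (simp add: sum_product)
  also have "\<dots> = (\<Sum>m<n. \<Sum>m'<n. \<Sum>\<gamma>\<in>UNIV. (\<rho> \<gamma> i m * \<rho> \<delta> m l) * (\<rho> \<gamma> i m' * \<rho> \<delta> m' l'))"
    by (rule sum_swap_inner2)
  also have "\<dots> = (\<Sum>m<n. \<Sum>m'<n. P m m' * \<rho> \<delta> m l * \<rho> \<delta> m' l')"
    unfolding P_def by (intro sum.cong refl) (simp add: sum_distrib_left sum_distrib_right mult_ac)
  also have "\<dots> = (\<Sum>m<n. \<Sum>m'<n. if m = m' then P m m * \<rho> \<delta> m l * \<rho> \<delta> m l' else 0)"
  proof (intro sum.cong refl)
    fix m m' assume "m \<in> {..<n}" "m' \<in> {..<n}"
    then show "P m m' * \<rho> \<delta> m l * \<rho> \<delta> m' l' = (if m = m' then P m m * \<rho> \<delta> m l * \<rho> \<delta> m l' else 0)"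
      using coeff_sum_orthogonal[OF r r, where l=m and l'=m' and k=i and k'=i] i unfolding P_def by auto
  qed
  finally show ?thesis unfolding P_def by simp
qed

lemma coeff_norm_commutes:
  assumes r: "(n, \<rho>) \<in> Rt" and i: "i < n" and jl: "l < n" "j < n"
  shows "(\<Sum>\<gamma>\<in>UNIV. \<rho> \<gamma> i l * \<rho> \<gamma> i l) * \<rho> \<delta> j l = (\<Sum>\<gamma>\<in>UNIV. \<rho> \<gamma> i j * \<rho> \<gamma> i j) * \<rho> \<delta> j l"
proof -
  define P where "P = (\<lambda>m. (\<Sum>\<gamma>\<in>UNIV. \<rho> \<gamma> i m * \<rho> \<gamma> i m))"
  have "P l * \<rho> \<delta> j l = (\<Sum>l'<n. (if l = l' then P l else 0) * \<rho> \<delta> j l')"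
    using jl by (simp add: if_distrib[of "\<lambda>x. x * _"] cong: if_cong)
  also have "\<dots> = (\<Sum>l'<n. (\<Sum>m<n. P m * \<rho> \<delta> m l * \<rho> \<delta> m l') * \<rho> \<delta> j l')"
  proof (rule sum.cong[OF refl])
    fix l' assume "l' \<in> {..<n}"
    then show "(if l = l' then P l else 0) * \<rho> \<delta> j l' = (\<Sum>m<n. P m * \<rho> \<delta> m l * \<rho> \<delta> m l') * \<rho> \<delta> j l'"
      using coeff_sum_row_conj[OF r i jl(1), of l' \<delta>]
        coeff_sum_orthogonal[OF r r, where l=l and l'=l' and k=i and k'=i] i jl
      unfolding P_def by auto
  qed
  also have "\<dots> = (\<Sum>m<n. P m * \<rho> \<delta> m l * (\<Sum>l'<n. \<rho> \<delta> m l' * \<rho> \<delta> j l'))"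
    by (simp add: sum_distrib_left sum_distrib_right mult_ac) (rule sum.swap)
  also have "\<dots> = (\<Sum>m<n. if m = j then P m * \<rho> \<delta> m l else 0)"
    using orth_rep_rows[OF Rt_orth_rep[OF r]] jl by (intro sum.cong) auto
  also have "\<dots> = P j * \<rho> \<delta> j l" using jl by simp
  finally show ?thesis unfolding P_def .
qed

lemma coeff_norm_row_const:
  assumes r: "(n, \<rho>) \<in> Rt" and i: "i < n" and l: "l < n"
  shows "(\<Sum>\<gamma>\<in>UNIV. \<rho> \<gamma> i l * \<rho> \<gamma> i l) = (\<Sum>\<gamma>\<in>UNIV. \<rho> \<gamma> i 0 * \<rho> \<gamma> i 0)"
proof -
  let ?P = "\<lambda>m. (\<Sum>\<gamma>\<in>UNIV. \<rho> \<gamma> i m * \<rho> \<gamma> i m)"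
  define S where "S = {x \<in> vecs n. \<forall>m. ?P m \<noteq> ?P 0 \<longrightarrow> x m = (0::real)}"
  have "is_lsubspace n S"
    unfolding is_lsubspace_def S_def vecs_def by auto
  moreover have "\<forall>\<gamma>. \<forall>x\<in>S. mvec n (\<rho> \<gamma>) x \<in> S"
  proof (intro allI ballI)
    fix \<gamma> x assume x: "x \<in> S"
    have "\<rho> \<gamma> m j * x j = 0" if "?P m \<noteq> ?P 0" "m < n" "j < n" for m j
    proof (cases "x j = 0")
      case False
      then have "?P j = ?P 0" using x unfolding S_def by auto
      then have "(?P 0 - ?P m) * \<rho> \<gamma> m j = 0"
        using coeff_norm_commutes[OF r i that(3,2)] by (simp add: algebra_simps)
      then show ?thesis using that(1) by simp
    qed simp
    then show "mvec n (\<rho> \<gamma>) x \<in> S"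
      unfolding S_def vecs_def by (auto simp: mvec_def intro!: sum.neutral)
  qed
  ultimately have "S = {\<lambda>_. 0} \<or> S = vecs n"
    using Rt_irreducible[OF r] unfolding rep_irreducible_def by blast
  moreover have "(\<lambda>j. if j = 0 then 1 else 0) \<in> S"
    unfolding S_def vecs_def using Rt_dim_pos[OF r] by auto
  ultimately have "S = vecs n"
    by (metis (mono_tags, lifting) singletonD zero_neq_one)
  moreover have "(\<lambda>j. if j = l then 1 else 0) \<in> vecs n" using l by (simp add: vecs_def)
  ultimately have "(\<lambda>j. if j = l then 1 else (0::real)) \<in> S" by simp
  then show ?thesis unfolding S_def by (auto split: if_splits)
qed

lemma coeff_norm_eq_schur_const:
  assumes r: "(n, \<rho>) \<in> Rt" and il: "i < n" "l < n"
  shows "(\<Sum>\<gamma>\<in>UNIV. \<rho> \<gamma> i l * \<rho> \<gamma> i l) = schur_const \<rho>"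
proof -
  have n: "0 < n" using Rt_dim_pos[OF r] .
  have "(\<Sum>\<gamma>\<in>UNIV. \<rho> \<gamma> i l * \<rho> \<gamma> i l) = (\<Sum>\<gamma>\<in>UNIV. \<rho> \<gamma> i 0 * \<rho> \<gamma> i 0)"
    by (rule coeff_norm_row_const[OF r il])
  also have "\<dots> = (\<Sum>\<gamma>\<in>UNIV. \<rho> \<gamma> 0 i * \<rho> \<gamma> 0 i)"
    by (rule coeff_sum_transpose[OF r il(1) n il(1) n])
  also have "\<dots> = (\<Sum>\<gamma>\<in>UNIV. \<rho> \<gamma> 0 0 * \<rho> \<gamma> 0 0)"
    by (rule coeff_norm_row_const[OF r n il(1)])
  finally show ?thesis by (simp add: schur_const_def)
qed

lemma schur_const_pos: "(n, \<rho>) \<in> Rt \<Longrightarrow> 0 < schur_const \<rho>"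
proof -
  assume r: "(n, \<rho>) \<in> Rt"
  then have "1 \<le> \<rho> 0 0 0 * \<rho> 0 0 0"
    using orth_rep_zero[OF Rt_orth_rep[OF r]] Rt_dim_pos[OF r] by simp
  also have "\<dots> \<le> schur_const \<rho>"
    unfolding schur_const_def by (rule member_le_sum) auto
  finally show ?thesis by simp
qed

theorem schur_orthogonality:
  assumes r: "(n, \<rho>) \<in> Rt" and s: "(m, \<sigma>) \<in> Rt"
    and il: "i < n" "l < n" and il': "i' < m" "l' < m"
  shows "(\<Sum>\<gamma>\<in>UNIV. \<rho> \<gamma> i l * \<sigma> \<gamma> i' l') =
    (if (n, \<rho>) = (m, \<sigma>) \<and> i = i' \<and> l = l' then schur_const \<rho> else 0)"
proof (cases "(n, \<rho>) = (m, \<sigma>) \<and> l = l'")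
  case False
  then show ?thesis using coeff_sum_orthogonal[OF r s _ il il'] by auto
next
  case True
  show ?thesis
  proof (cases "i = i'")
    case True
    then show ?thesis using coeff_norm_eq_schur_const[OF r il] \<open>_ \<and> l = l'\<close> by simp
  next
    case False
    have "(\<Sum>\<gamma>\<in>UNIV. \<rho> \<gamma> i l * \<sigma> \<gamma> i' l') = (\<Sum>\<gamma>\<in>UNIV. \<rho> \<gamma> l i * \<rho> \<gamma> l' i')"
      using coeff_sum_transpose[OF r il] il' True by simp
    also have "\<dots> = 0" using coeff_sum_orthogonal[OF r r, of i i' l l'] il il' True False by simp
    finally show ?thesis using False by simp
  qed
qed

lemma trivial_rep_in_Rt: "\<exists>\<tau>. (1, \<tau>) \<in> Rt \<and> (\<forall>\<gamma>. \<tau> \<gamma> 0 0 = 1)"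
proof -
  let ?one = "\<lambda>(\<gamma>::'g) (i::nat) (j::nat). (1::real)"
  have "is_rep 1 ?one" unfolding is_rep_def by simp
  then obtain m \<tau> where "(m, \<tau>) \<in> Rt" "rep_equiv 1 ?one m \<tau>"
    using irrep_reps rep_irreducible_dim_one[of ?one] unfolding irrep_reps_def by blast
  moreover from this obtain T S where "m = 1" "T 0 0 * S 0 0 = 1" "\<forall>\<gamma>. T 0 0 = \<tau> \<gamma> 0 0 * T 0 0"
    unfolding rep_equiv_def by auto
  ultimately show ?thesis by (metis mult_cancel_right1 mult_not_zero zero_neq_one)
qed

lemma Psi_translation_invariant:
  assumes K: "translation_invariant K" and b: "\<beta> \<in> blockB Rt" "\<beta>' \<in> blockB Rt"
  shows "Psi Z K (\<beta>, u) (\<beta>', w) = (\<Sum>\<gamma>\<in>UNIV. blockrep \<gamma> \<beta> \<beta>' * K (0, u) (\<gamma>, w))"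
proof -
  have "Psi Z K (\<beta>, u) (\<beta>', w) = (\<Sum>\<alpha>\<in>UNIV. \<Sum>\<gamma>\<in>UNIV. Z \<alpha> \<beta> * K (\<alpha>, u) (\<alpha> + \<gamma>, w) * Z (\<alpha> + \<gamma>) \<beta>')"
    unfolding Psi_apply by (rule sum.cong[OF refl]) (rule sum_UNIV_add_left[symmetric])
  also have "\<dots> = (\<Sum>\<gamma>\<in>UNIV. K (0, u) (\<gamma>, w) * (\<Sum>\<alpha>\<in>UNIV. Z \<alpha> \<beta> * Z (\<alpha> + \<gamma>) \<beta>'))"
    using translation_invariant_shift[OF K]
    by (subst sum.swap) (simp add: sum_distrib_left mult_ac)
  finally show ?thesis using Z_regular_blockrep[OF b] by (simp add: mult.commute)
qed

lemma Psi_block_translation_invariant: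
  assumes K: "translation_invariant K" and r: "(n, \<rho>) \<in> Rt" and b: "b < n" "b' < n"
  shows "Psi Z K (((n, \<rho>), 0, b), u) (((n, \<rho>), 0, b'), w) = (\<Sum>\<gamma>\<in>UNIV. \<rho> \<gamma> b b' * K (0, u) (\<gamma>, w))"
  using Psi_translation_invariant[OF K blockB_memI[OF r Rt_dim_pos[OF r] b(1)] blockB_memI[OF r Rt_dim_pos[OF r] b(2)]]
  by (simp add: blockrep_simps)

lemma Psi_inverse:
  "K (\<alpha>1, u) (\<alpha>2, w) = (\<Sum>\<beta>1\<in>blockB Rt. \<Sum>\<beta>2\<in>blockB Rt. Z \<alpha>1 \<beta>1 * Z \<alpha>2 \<beta>2 * Psi Z K (\<beta>1, u) (\<beta>2, w))"
proof -
  let ?f = "\<lambda>\<beta>1 \<beta>2 a1 a2. (Z \<alpha>1 \<beta>1 * Z a1 \<beta>1) * (Z \<alpha>2 \<beta>2 * Z a2 \<beta>2) * K (a1, u) (a2, w)"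
  have "(\<Sum>\<beta>1\<in>blockB Rt. \<Sum>\<beta>2\<in>blockB Rt. Z \<alpha>1 \<beta>1 * Z \<alpha>2 \<beta>2 * Psi Z K (\<beta>1, u) (\<beta>2, w))
     = (\<Sum>\<beta>1\<in>blockB Rt. \<Sum>\<beta>2\<in>blockB Rt. \<Sum>a1\<in>UNIV. \<Sum>a2\<in>UNIV. ?f \<beta>1 \<beta>2 a1 a2)"
    unfolding Psi_apply by (simp add: sum_distrib_left mult_ac)
  also have "\<dots> = (\<Sum>\<beta>1\<in>blockB Rt. \<Sum>a1\<in>UNIV. \<Sum>\<beta>2\<in>blockB Rt. \<Sum>a2\<in>UNIV. ?f \<beta>1 \<beta>2 a1 a2)"
    by (intro sum.cong refl) (rule sum.swap)
  also have "\<dots> = (\<Sum>a1\<in>UNIV. \<Sum>\<beta>1\<in>blockB Rt. \<Sum>a2\<in>UNIV. \<Sum>\<beta>2\<in>blockB Rt. ?f \<beta>1 \<beta>2 a1 a2)"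
    by (subst sum.swap) (intro sum.cong refl, rule sum.swap)
  also have "\<dots> = (\<Sum>a1\<in>UNIV. \<Sum>a2\<in>UNIV. \<Sum>\<beta>1\<in>blockB Rt. \<Sum>\<beta>2\<in>blockB Rt. ?f \<beta>1 \<beta>2 a1 a2)"
    by (intro sum.cong refl) (rule sum.swap)
  also have "\<dots> = (\<Sum>a1\<in>UNIV. \<Sum>a2\<in>UNIV. (\<Sum>\<beta>1\<in>blockB Rt. Z \<alpha>1 \<beta>1 * Z a1 \<beta>1)
      * (\<Sum>\<beta>2\<in>blockB Rt. Z \<alpha>2 \<beta>2 * Z a2 \<beta>2) * K (a1, u) (a2, w))"
    by (intro sum.cong refl) (simp add: sum_distrib_left sum_distrib_right mult.assoc, rule sum.swap)
  also have "\<dots> = (\<Sum>a1\<in>UNIV. \<Sum>a2\<in>UNIV. if a1 = \<alpha>1 \<and> a2 = \<alpha>2 then K (a1, u) (a2, w) else 0)"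
    by (intro sum.cong refl) (auto simp: Z_rows_orthonormal)
  also have "\<dots> = (\<Sum>a1\<in>UNIV. if a1 = \<alpha>1 then (\<Sum>a2\<in>UNIV. if a2 = \<alpha>2 then K (\<alpha>1, u) (\<alpha>2, w) else 0) else 0)"
    by (intro sum.cong refl) auto
  finally show ?thesis by simp
qed

text \<open>The sums in \<open>coeffs\<close> are the Fourier coefficients of a kernel; by translation invariance they
  are the entries of its image under \<open>\<Psi>\<close>, and \<open>\<Psi>\<close> is invertible.\<close>
lemma translation_invariant_eqI:
  assumes K1: "translation_invariant K1" and K2: "translation_invariant K2"
    and coeffs: "\<And>n \<rho> b b' u w. (n, \<rho>) \<in> Rt \<Longrightarrow> b < n \<Longrightarrow> b' < n \<Longrightarrow>
       (\<Sum>\<gamma>\<in>UNIV. \<rho> \<gamma> b b' * K1 (0, u) (\<gamma>, w)) = (\<Sum>\<gamma>\<in>UNIV. \<rho> \<gamma> b b' * K2 (0, u) (\<gamma>, w))"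
  shows "K1 = K2"
proof -
  have "Psi Z K1 (\<beta>1, u) (\<beta>2, w) = Psi Z K2 (\<beta>1, u) (\<beta>2, w)"
    if b: "\<beta>1 \<in> blockB Rt" "\<beta>2 \<in> blockB Rt" for \<beta>1 \<beta>2 u w
  proof -
    obtain n \<rho> a b n' \<rho>' a' b' where \<beta>: "\<beta>1 = ((n, \<rho>), a, b)" "\<beta>2 = ((n', \<rho>'), a', b')"
      by (metis prod.collapse)
    then have "(n, \<rho>) \<in> Rt" "b < n" "b' < n'" using b by (auto simp: blockB_def)
    then show ?thesis
      unfolding Psi_translation_invariant[OF K1 b] Psi_translation_invariant[OF K2 b]
      unfolding \<beta> blockrep_simps using coeffs by (cases "(n, \<rho>) = (n', \<rho>') \<and> a = a'") auto
  qed
  then have "K1 (\<alpha>1, u) (\<alpha>2, w) = K2 (\<alpha>1, u) (\<alpha>2, w)" for \<alpha>1 u \<alpha>2 w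
    by (simp add: Psi_inverse[of K1] Psi_inverse[of K2])
  then show ?thesis by (intro ext) (metis prod.collapse)
qed

lemma sum_Psi_config_trivial_block:
  assumes \<tau>: "(1, \<tau>) \<in> Rt" "\<forall>\<gamma>. \<tau> \<gamma> 0 0 = 1"
  shows "(\<Sum>u\<in>UNIV. Psi_config Z y (((1, \<tau>), 0, 0), u)) = Z 0 ((1, \<tau>), 0, 0) *\<^sub>R (\<Sum>i\<in>UNIV. y i)"
proof -
  have Z_const: "Z \<alpha> ((1, \<tau>), 0, 0) = Z 0 ((1, \<tau>), 0, 0)" for \<alpha>
    using Z_translate_zero[OF \<tau>(1), of 0 0 \<alpha>] \<tau>(2) by simp
  have "(\<Sum>u\<in>UNIV. Psi_config Z y (((1, \<tau>), 0, 0), u)) = (\<Sum>u\<in>UNIV. \<Sum>\<alpha>\<in>UNIV. Z 0 ((1, \<tau>), 0, 0) *\<^sub>R y (\<alpha>, u))"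
    unfolding Psi_config_def prod.case by (intro sum.cong refl) (subst Z_const, rule refl)
  also have "\<dots> = Z 0 ((1, \<tau>), 0, 0) *\<^sub>R (\<Sum>u\<in>UNIV. \<Sum>\<alpha>\<in>UNIV. y (\<alpha>, u))"
    by (simp add: scaleR_sum_right)
  also have "(\<Sum>u\<in>UNIV. \<Sum>\<alpha>\<in>UNIV. y (\<alpha>, u)) = (\<Sum>i\<in>UNIV. y i)"
    by (subst sum.swap) (simp add: sum.cartesian_product UNIV_Times_UNIV[symmetric] del: UNIV_Times_UNIV)
  finally show ?thesis .
qed

end

section \<open>Intertwiners and the isotypic decomposition\<close>

lemma orthogonal_matrix_inner: "orthogonal_matrix (A::real^'n^'n) \<Longrightarrow> (A *v x) \<bullet> (A *v y) = x \<bullet> y"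
  by (metis dot_lmul_matrix matrix_vector_mul_assoc matrix_vector_mul_lid orthogonal_matrix_def
      transpose_matrix_vector)

lemma matrix_vector_mult_sum: "A *v (\<Sum>a\<in>S. f a) = (\<Sum>a\<in>S. A *v f a)"
  by (induction S rule: infinite_finite_induct) (simp_all add: matrix_vector_right_distrib)

lemmas matrix_vector_linear_simps = matrix_vector_mult_scaleR matrix_vector_mult_sum

definition intertwiner :: "('g \<Rightarrow> real^'d^'d) \<Rightarrow> nat \<Rightarrow> ('g \<Rightarrow> nat \<Rightarrow> nat \<Rightarrow> real) \<Rightarrow> (nat \<Rightarrow> real^'d) \<Rightarrow> bool"
  where "intertwiner \<theta> n \<rho> F \<longleftrightarrow> (\<forall>\<gamma>. \<forall>b<n. \<theta> \<gamma> *v F b = (\<Sum>b'<n. \<rho> \<gamma> b' b *\<^sub>R F b'))"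

lemma intertwiner_zero: "intertwiner \<theta> n \<rho> (\<lambda>_. 0)"
  by (simp add: intertwiner_def)

lemma intertwiner_lincomb:
  "intertwiner \<theta> n \<rho> F \<Longrightarrow> intertwiner \<theta> n \<rho> G \<Longrightarrow> intertwiner \<theta> n \<rho> (\<lambda>b. a *\<^sub>R F b + c *\<^sub>R G b)"
  unfolding intertwiner_def
  by (simp add: matrix_vector_linear_simps scaleR_sum_right sum.distrib algebra_simps)

lemma intertwiner_relations_invariant:
  assumes G: "intertwiner \<theta> n \<rho> G" and x: "(\<Sum>b<n. x b *\<^sub>R G b) = 0"
  shows "(\<Sum>b<n. mvec n (\<rho> \<gamma>) x b *\<^sub>R G b) = 0"
proof -
  have "(\<Sum>b<n. mvec n (\<rho> \<gamma>) x b *\<^sub>R G b) = (\<Sum>b<n. \<Sum>b'<n. (\<rho> \<gamma> b b' * x b') *\<^sub>R G b)"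
    by (simp add: mvec_def scaleR_sum_left)
  also have "\<dots> = (\<Sum>b'<n. x b' *\<^sub>R (\<Sum>b<n. \<rho> \<gamma> b b' *\<^sub>R G b))"
    by (subst sum.swap) (simp add: scaleR_sum_right mult.commute)
  also have "\<dots> = \<theta> \<gamma> *v (\<Sum>b'<n. x b' *\<^sub>R G b')"
    using G by (simp add: intertwiner_def matrix_vector_linear_simps)
  finally show ?thesis using x by simp
qed

lemma intertwiner_span_invariant:
  assumes G: "intertwiner \<theta> n \<rho> G"
  shows "theta_invariant \<theta> (span (G ` {..<n}))"
  unfolding theta_invariant_def
proof
  fix \<gamma>
  have "\<theta> \<gamma> *v G b \<in> span (G ` {..<n})" if "b < n" for b
  proof -
    have "\<theta> \<gamma> *v G b = (\<Sum>b'<n. \<rho> \<gamma> b' b *\<^sub>R G b')" using G that by (simp add: intertwiner_def)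
    also have "\<dots> \<in> span (G ` {..<n})" by (intro span_sum span_mul span_base) auto
    finally show ?thesis .
  qed
  then have "(*v) (\<theta> \<gamma>) ` G ` {..<n} \<subseteq> span (G ` {..<n})" by auto
  then have "span ((*v) (\<theta> \<gamma>) ` G ` {..<n}) \<subseteq> span (G ` {..<n})"
    by (simp add: span_minimal)
  then show "(\<lambda>x. \<theta> \<gamma> *v x) ` span (G ` {..<n}) \<subseteq> span (G ` {..<n})"
    by (simp add: span_linear_image)
qed

locale point_group_decomposition = regular_decomposition Rt Z
  for Rt :: "(nat \<times> ('g::{finite,group_add} \<Rightarrow> nat \<Rightarrow> nat \<Rightarrow> real)) set" and Z +
  fixes \<theta> :: "'g \<Rightarrow> real^'d^'d" and k :: nat and W :: "nat \<Rightarrow> (real^'d) set"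
  assumes point_group: "point_group \<theta>"
    and irred_decomp: "irred_decomp \<theta> k W"
begin

lemma inner_theta: "(\<theta> \<gamma> *v x) \<bullet> (\<theta> \<gamma> *v y) = x \<bullet> y"
  using point_group orthogonal_matrix_inner unfolding point_group_def by blast

lemma theta_add: "\<theta> (\<gamma> + \<delta>) *v x = \<theta> \<gamma> *v (\<theta> \<delta> *v x)"
  using point_group unfolding point_group_def by (simp add: matrix_vector_mul_assoc)

lemma theta_zero: "\<theta> 0 *v x = x"
proof -
  have "\<theta> 0 = mat 1"
    using point_group unfolding point_group_def
    by (metis ab_left_minus add.inverse_neutral matrix_mul_assoc matrix_mul_lid orthogonal_matrix)
  then show ?thesis by simp
qed

lemma intertwiner_inner_average:
  assumes F: "intertwiner \<theta> n \<rho> F" and G: "intertwiner \<theta> m \<sigma> G" and b: "b < n" "b' < m"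
  shows "real CARD('g) * (F b \<bullet> G b') = (\<Sum>i<n. \<Sum>l<m. (F i \<bullet> G l) * (\<Sum>\<gamma>\<in>UNIV. \<rho> \<gamma> i b * \<sigma> \<gamma> l b'))"
proof -
  have "F b \<bullet> G b' = (\<Sum>i<n. \<Sum>l<m. \<rho> \<gamma> i b * \<sigma> \<gamma> l b' * (F i \<bullet> G l))" for \<gamma>
  proof -
    have "F b \<bullet> G b' = (\<theta> \<gamma> *v F b) \<bullet> (\<theta> \<gamma> *v G b')" by (simp add: inner_theta)
    also have "\<dots> = (\<Sum>i<n. \<rho> \<gamma> i b *\<^sub>R F i) \<bullet> (\<Sum>l<m. \<sigma> \<gamma> l b' *\<^sub>R G l)"
      using F G b unfolding intertwiner_def by simp
    also have "\<dots> = (\<Sum>i<n. \<Sum>l<m. \<rho> \<gamma> i b * \<sigma> \<gamma> l b' * (F i \<bullet> G l))"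
      unfolding inner_sum_left by (intro sum.cong refl) (simp add: inner_sum_right sum_distrib_left mult_ac)
    finally show ?thesis .
  qed
  then have "real CARD('g) * (F b \<bullet> G b') = (\<Sum>\<gamma>\<in>UNIV. \<Sum>i<n. \<Sum>l<m. \<rho> \<gamma> i b * \<sigma> \<gamma> l b' * (F i \<bullet> G l))"
    by simp
  also have "\<dots> = (\<Sum>i<n. \<Sum>l<m. \<Sum>\<gamma>\<in>UNIV. \<rho> \<gamma> i b * \<sigma> \<gamma> l b' * (F i \<bullet> G l))"
    by (rule sum_swap_inner2)
  also have "\<dots> = (\<Sum>i<n. \<Sum>l<m. (F i \<bullet> G l) * (\<Sum>\<gamma>\<in>UNIV. \<rho> \<gamma> i b * \<sigma> \<gamma> l b'))"
    by (intro sum.cong refl) (simp add: sum_distrib_left sum_distrib_right mult_ac)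
  finally show ?thesis .
qed

lemma intertwiner_inner_distinct:
  assumes r: "(n, \<rho>) \<in> Rt" and s: "(m, \<sigma>) \<in> Rt" and ne: "(n, \<rho>) \<noteq> (m, \<sigma>)"
    and F: "intertwiner \<theta> n \<rho> F" and G: "intertwiner \<theta> m \<sigma> G" and b: "b < n" "b' < m"
  shows "F b \<bullet> G b' = 0"
proof -
  have "real CARD('g) * (F b \<bullet> G b') = 0"
    unfolding intertwiner_inner_average[OF F G b] using schur_orthogonality[OF r s] b ne
    by (auto intro!: sum.neutral)
  then show ?thesis by simp
qed

lemma intertwiner_inner:
  assumes r: "(n, \<rho>) \<in> Rt" and F: "intertwiner \<theta> n \<rho> F" and G: "intertwiner \<theta> n \<rho> G"
    and b: "b < n" "b' < n"
  shows "F b \<bullet> G b' = (if b = b' then F 0 \<bullet> G 0 else 0)"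
proof -
  have avg: "real CARD('g) * (F c \<bullet> G c') = (if c = c' then schur_const \<rho> * (\<Sum>i<n. F i \<bullet> G i) else 0)"
    if c: "c < n" "c' < n" for c c'
  proof -
    have "real CARD('g) * (F c \<bullet> G c')
        = (\<Sum>i<n. \<Sum>l<n. (F i \<bullet> G l) * (if i = l \<and> c = c' then schur_const \<rho> else 0))"
      unfolding intertwiner_inner_average[OF F G c] using schur_orthogonality[OF r r] c
      by (intro sum.cong refl) auto
    also have "\<dots> = (\<Sum>i<n. if c = c' then (F i \<bullet> G i) * schur_const \<rho> else 0)"
      by (intro sum.cong refl) (auto simp: if_distrib[of "\<lambda>x. _ * x"] cong: if_cong)
    finally show ?thesis by (simp add: sum_distrib_left mult_ac)
  qed
  show ?thesis
  proof (cases "b = b'")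
    case True
    then have "real CARD('g) * (F b \<bullet> G b') = real CARD('g) * (F 0 \<bullet> G 0)"
      using avg[OF b] avg[of 0 0] Rt_dim_pos[OF r] by simp
    then show ?thesis using True by simp
  qed (use avg[OF b] in simp)
qed

lemma W_properties: "i < k \<Longrightarrow> subspace (W i) \<and> W i \<noteq> {0} \<and> theta_invariant \<theta> (W i) \<and>
    (\<forall>U. subspace U \<and> U \<subseteq> W i \<and> theta_invariant \<theta> U \<longrightarrow> U = {0} \<or> U = W i)"
  using irred_decomp unfolding irred_decomp_def by blast

lemma W_subspace: "i < k \<Longrightarrow> subspace (W i)"
  and W_theta_invariant: "i < k \<Longrightarrow> theta_invariant \<theta> (W i)"
  using W_properties by blast+

lemma W_minimal:
  assumes "i < k" "subspace U" "U \<subseteq> W i" "theta_invariant \<theta> U"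
  shows "U = {0} \<or> U = W i"
  using W_properties[OF assms(1)] assms(2-4) by blast

definition W_component :: "real^'d \<Rightarrow> nat \<Rightarrow> real^'d" where
  "W_component x = (THE w. (\<forall>i<k. w i \<in> W i) \<and> (\<forall>i\<ge>k. w i = 0) \<and> x = (\<Sum>i<k. w i))"

lemma W_decomposition_unique: "\<exists>!w. (\<forall>i<k. w i \<in> W i) \<and> (\<forall>i\<ge>k. w i = 0) \<and> x = (\<Sum>i<k. w i)"
  using irred_decomp unfolding irred_decomp_def by (rule conjunct2[THEN spec])

lemma W_component_spec: "(\<forall>i<k. W_component x i \<in> W i) \<and> (\<forall>i\<ge>k. W_component x i = 0) \<and> x = (\<Sum>i<k. W_component x i)"
  unfolding W_component_def by (rule theI'[OF W_decomposition_unique])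

lemma W_component_mem: "i < k \<Longrightarrow> W_component x i \<in> W i"
  and W_component_beyond: "k \<le> i \<Longrightarrow> W_component x i = 0"
  and W_component_sum: "x = (\<Sum>i<k. W_component x i)"
  using W_component_spec by blast+

lemma W_component_unique:
  "(\<forall>i<k. w i \<in> W i) \<Longrightarrow> (\<forall>i\<ge>k. w i = 0) \<Longrightarrow> x = (\<Sum>i<k. w i) \<Longrightarrow> W_component x = w"
  unfolding W_component_def by (rule the1_equality[OF W_decomposition_unique]) blast

lemma W_component_zero: "W_component 0 = (\<lambda>_. 0)"
  by (rule W_component_unique) (use W_subspace subspace_0 in auto)

lemma W_component_add: "W_component (x + y) = (\<lambda>i. W_component x i + W_component y i)"
proof (rule W_component_unique)
  show "\<forall>i<k. W_component x i + W_component y i \<in> W i"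
    using W_component_mem W_subspace subspace_add by blast
  show "x + y = (\<Sum>i<k. W_component x i + W_component y i)"
    using W_component_sum[of x] W_component_sum[of y] by (simp add: sum.distrib)
qed (simp add: W_component_beyond)

lemma W_component_scaleR: "W_component (c *\<^sub>R x) = (\<lambda>i. c *\<^sub>R W_component x i)"
proof (rule W_component_unique)
  show "\<forall>i<k. c *\<^sub>R W_component x i \<in> W i"
    using W_component_mem W_subspace subspace_scale by blast
  show "c *\<^sub>R x = (\<Sum>i<k. c *\<^sub>R W_component x i)"
    using W_component_sum[of x] by (simp add: scaleR_sum_right[symmetric])
qed (simp add: W_component_beyond)

lemma W_component_sum_over: "W_component (\<Sum>a\<in>A. f a) = (\<lambda>i. \<Sum>a\<in>A. W_component (f a) i)"
  by (induction A rule: infinite_finite_induct) (auto simp: W_component_zero W_component_add)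

lemma W_component_theta: "W_component (\<theta> \<gamma> *v x) = (\<lambda>i. \<theta> \<gamma> *v W_component x i)"
proof (rule W_component_unique)
  show "\<forall>i<k. \<theta> \<gamma> *v W_component x i \<in> W i"
    using W_component_mem W_theta_invariant unfolding theta_invariant_def by blast
  show "\<theta> \<gamma> *v x = (\<Sum>i<k. \<theta> \<gamma> *v W_component x i)"
    using W_component_sum[of x] matrix_vector_mult_sum by metis
qed (simp add: W_component_beyond)

lemma intertwiner_W_component:
  assumes F: "intertwiner \<theta> n \<rho> F"
  shows "intertwiner \<theta> n \<rho> (\<lambda>b. W_component (F b) i)"
  unfolding intertwiner_def
proof (intro allI impI)
  fix \<gamma> b assume "b < n"
  have "\<theta> \<gamma> *v W_component (F b) i = W_component (\<theta> \<gamma> *v F b) i"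
    by (simp add: W_component_theta)
  also have "\<dots> = W_component (\<Sum>b'<n. \<rho> \<gamma> b' b *\<^sub>R F b') i"
    using F \<open>b < n\<close> unfolding intertwiner_def by simp
  finally show "\<theta> \<gamma> *v W_component (F b) i = (\<Sum>b'<n. \<rho> \<gamma> b' b *\<^sub>R W_component (F b') i)"
    by (simp add: W_component_sum_over W_component_scaleR)
qed

text \<open>Schur's lemma: the relations among the vectors of an intertwiner into an irreducible
  \<open>W i\<close> form a \<open>\<rho>\<close>-invariant subspace, so either there are none, and the vectors form a basis
  of a nonzero invariant subspace of \<open>W i\<close>, which then is \<open>W i\<close> itself, or all of them vanish.\<close>
lemma intertwiner_into_W:
  assumes r: "(n, \<rho>) \<in> Rt" and i: "i < k" and G: "intertwiner \<theta> n \<rho> G"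
    and GW: "\<forall>b<n. G b \<in> W i"
  shows "subrep_equiv \<theta> (W i) (n, \<rho>) \<or> (\<forall>b<n. G b = 0)"
proof -
  define K where "K = {x \<in> vecs n. (\<Sum>b<n. x b *\<^sub>R G b) = 0}"
  have "is_lsubspace n K"
    unfolding is_lsubspace_def K_def vecs_def
    by (auto simp: scaleR_add_left sum.distrib scaleR_sum_right[symmetric] simp flip: scaleR_scaleR)
  moreover have "\<forall>\<gamma>. \<forall>x\<in>K. mvec n (\<rho> \<gamma>) x \<in> K"
    using intertwiner_relations_invariant[OF G] unfolding K_def vecs_def by (simp add: mvec_def)
  ultimately have "K = {\<lambda>_. 0} \<or> K = vecs n"
    using Rt_irreducible[OF r] unfolding rep_irreducible_def by blast
  then show ?thesis
  proof
    assume K0: "K = {\<lambda>_. 0}"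
    have no_relation: "\<forall>b\<in>{..<n}. c b = 0" if "(\<Sum>b\<in>{..<n}. c b *\<^sub>R G b) = 0" for c
    proof -
      have "(\<lambda>b. if b < n then c b else 0) \<in> K" using that unfolding K_def vecs_def by simp
      then show ?thesis using K0 by (auto simp: fun_eq_iff split: if_splits)
    qed
    have G_indep: "inj_on G {..<n}" "independent (G ` {..<n})"
      using no_relation_imp_inj_on[of "{..<n}" G] no_relation_imp_independent[of "{..<n}" G] no_relation
      by auto
    let ?U = "span (G ` {..<n})"
    have "G 0 \<noteq> 0" "0 < n"
      using Rt_dim_pos[OF r] G_indep(2) dependent_zero[of "G ` {..<n}"] by force+
    then have "?U \<noteq> {0}" using span_base[of "G 0" "G ` {..<n}"] by auto
    moreover have "?U \<subseteq> W i"
      using GW W_subspace[OF i] by (metis image_subsetI lessThan_iff span_minimal)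
    ultimately have "?U = W i"
      using W_minimal[OF i _ _ intertwiner_span_invariant[OF G]] by auto
    then show ?thesis
      unfolding subrep_equiv_def using G G_indep by (auto simp: intertwiner_def)
  next
    assume "K = vecs n"
    have "G b = 0" if "b < n" for b
    proof -
      have "(\<lambda>j. if j = b then 1 else 0) \<in> K" using \<open>K = vecs n\<close> that by (simp add: vecs_def)
      then show ?thesis using that unfolding K_def by (simp add: if_distrib[of "\<lambda>x. x *\<^sub>R _"] cong: if_cong)
    qed
    then show ?thesis by blast
  qed
qed

definition isotypic_indices :: "nat \<times> ('g \<Rightarrow> nat \<Rightarrow> nat \<Rightarrow> real) \<Rightarrow> nat set" where
  "isotypic_indices r = {i. i < k \<and> subrep_equiv \<theta> (W i) r}"

lemma finite_isotypic_indices: "finite (isotypic_indices r)"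
  unfolding isotypic_indices_def by simp

lemma card_isotypic_indices: "card (isotypic_indices r) = rep_multiplicity \<theta> k W r"
  unfolding isotypic_indices_def rep_multiplicity_def by simp

definition W_basis :: "nat \<Rightarrow> nat \<times> ('g \<Rightarrow> nat \<Rightarrow> nat \<Rightarrow> real) \<Rightarrow> nat \<Rightarrow> real^'d" where
  "W_basis i r = (SOME T. inj_on T {..<fst r} \<and> independent (T ` {..<fst r}) \<and> span (T ` {..<fst r}) = W i \<and>
        intertwiner \<theta> (fst r) (snd r) T)"

lemma W_basis:
  assumes "i \<in> isotypic_indices (n, \<rho>)"
  shows "independent (W_basis i (n, \<rho>) ` {..<n})" "span (W_basis i (n, \<rho>) ` {..<n}) = W i"
    and "intertwiner \<theta> n \<rho> (W_basis i (n, \<rho>))"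
proof -
  have "\<exists>T. inj_on T {..<n} \<and> independent (T ` {..<n}) \<and> span (T ` {..<n}) = W i \<and> intertwiner \<theta> n \<rho> T"
    using assms unfolding isotypic_indices_def subrep_equiv_def intertwiner_def by simp
  from someI_ex[OF this] show "independent (W_basis i (n, \<rho>) ` {..<n})"
    "span (W_basis i (n, \<rho>) ` {..<n}) = W i" "intertwiner \<theta> n \<rho> (W_basis i (n, \<rho>))"
    unfolding W_basis_def by simp_all
qed

lemma W_basis_mem: "i \<in> isotypic_indices (n, \<rho>) \<Longrightarrow> b < n \<Longrightarrow> W_basis i (n, \<rho>) b \<in> W i"
  using W_basis(2)[of i n \<rho>] span_base[of "W_basis i (n, \<rho>) b" "W_basis i (n, \<rho>) ` {..<n}"] by simp

lemma W_basis_nonzero: "i \<in> isotypic_indices (n, \<rho>) \<Longrightarrow> b < n \<Longrightarrow> W_basis i (n, \<rho>) b \<noteq> 0"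
  using W_basis(1)[of i n \<rho>] dependent_zero[of "W_basis i (n, \<rho>) ` {..<n}"] by force

text \<open>Schur's lemma for two copies of \<open>\<rho>\<close>: subtracting the right multiple of \<open>W_basis i\<close> leaves an
  intertwiner into \<open>W i\<close> that is orthogonal to that basis by Schur orthogonality, hence zero.\<close>
lemma intertwiner_into_isotypic_W:
  assumes r: "(n, \<rho>) \<in> Rt" and i: "i \<in> isotypic_indices (n, \<rho>)" and G: "intertwiner \<theta> n \<rho> G"
    and GW: "\<forall>b<n. G b \<in> W i" and b: "b < n"
  defines "T \<equiv> W_basis i (n, \<rho>)"
  shows "G b = ((G 0 \<bullet> T 0) / (T 0 \<bullet> T 0)) *\<^sub>R T b"
proof -
  have T: "intertwiner \<theta> n \<rho> T" "span (T ` {..<n}) = W i" "T 0 \<noteq> 0"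
    using W_basis[OF i] W_basis_nonzero[OF i Rt_dim_pos[OF r]] unfolding T_def by simp_all
  define H where "H = (\<lambda>b. 1 *\<^sub>R G b + (- ((G 0 \<bullet> T 0) / (T 0 \<bullet> T 0))) *\<^sub>R T b)"
  have H: "intertwiner \<theta> n \<rho> H"
    unfolding H_def by (rule intertwiner_lincomb[OF G T(1)])
  have "H 0 \<bullet> T 0 = 0"
    using T(3) unfolding H_def by (simp add: inner_diff_left)
  then have H_orth: "H b \<bullet> T b' = 0" if "b' < n" for b'
    using intertwiner_inner[OF r H T(1) b that] by auto
  have "i < k" using i unfolding isotypic_indices_def by simp
  then have H_mem: "H b \<in> W i"
    unfolding H_def using GW W_basis_mem[OF i b] W_subspace b unfolding T_def
    by (intro subspace_add subspace_scale) auto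
  have "orthogonal (H b) (H b)"
  proof (rule orthogonal_to_span)
    show "H b \<in> span (T ` {..<n})" using H_mem T(2) by simp
    show "\<And>y. y \<in> T ` {..<n} \<Longrightarrow> orthogonal (H b) y" using H_orth by (auto simp: orthogonal_def)
  qed
  then have "H b = 0" by (simp add: orthogonal_def)
  then show ?thesis unfolding H_def by (simp add: algebra_simps)
qed

lemma intertwiner_decomposition:
  assumes r: "(n, \<rho>) \<in> Rt" and F: "intertwiner \<theta> n \<rho> F"
  shows "\<exists>c. \<forall>b<n. F b = (\<Sum>i\<in>isotypic_indices (n, \<rho>). c i *\<^sub>R W_basis i (n, \<rho>) b)"
proof (intro exI allI impI)
  fix b assume b: "b < n"
  have zero: "W_component (F b) i = 0" if "i < k" "i \<notin> isotypic_indices (n, \<rho>)" for i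
    using intertwiner_into_W[OF r \<open>i < k\<close> intertwiner_W_component[OF F]] W_component_mem that b
    unfolding isotypic_indices_def by blast
  have "F b = (\<Sum>i<k. W_component (F b) i)" by (rule W_component_sum)
  also have "\<dots> = (\<Sum>i\<in>isotypic_indices (n, \<rho>). W_component (F b) i)"
    by (rule sum.mono_neutral_right) (auto simp: isotypic_indices_def zero)
  also have "\<dots> = (\<Sum>i\<in>isotypic_indices (n, \<rho>).
      ((W_component (F 0) i \<bullet> W_basis i (n, \<rho>) 0) / (W_basis i (n, \<rho>) 0 \<bullet> W_basis i (n, \<rho>) 0))
        *\<^sub>R W_basis i (n, \<rho>) b)"
    using intertwiner_into_isotypic_W[OF r _ intertwiner_W_component[OF F] _ b] W_component_mem
    by (intro sum.cong refl) (auto simp: isotypic_indices_def)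
  finally show "F b = (\<Sum>i\<in>isotypic_indices (n, \<rho>). ((W_component (F 0) i \<bullet> W_basis i (n, \<rho>) 0)
      / (W_basis i (n, \<rho>) 0 \<bullet> W_basis i (n, \<rho>) 0)) *\<^sub>R W_basis i (n, \<rho>) b)" .
qed

abbreviation base_points :: "nat \<times> ('g \<Rightarrow> nat \<Rightarrow> nat \<Rightarrow> real) \<Rightarrow> (real^'d) set" where
  "base_points r \<equiv> (\<lambda>i. W_basis i r 0) ` isotypic_indices r"

lemma intertwiner_through_base_point:
  assumes x: "x \<in> span (base_points (n, \<rho>))"
  shows "\<exists>F. intertwiner \<theta> n \<rho> F \<and> F 0 = x"
proof (rule span_induct[OF x])
  show "subspace {x. \<exists>F. intertwiner \<theta> n \<rho> F \<and> F 0 = x}"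
  proof (rule subspaceI)
    show "0 \<in> {x. \<exists>F. intertwiner \<theta> n \<rho> F \<and> F 0 = x}"
      using intertwiner_zero by blast
  next
    fix x y assume "x \<in> {x. \<exists>F. intertwiner \<theta> n \<rho> F \<and> F 0 = x}" "y \<in> {x. \<exists>F. intertwiner \<theta> n \<rho> F \<and> F 0 = x}"
    then obtain F G where "intertwiner \<theta> n \<rho> F" "F 0 = x" "intertwiner \<theta> n \<rho> G" "G 0 = y" by auto
    then show "x + y \<in> {x. \<exists>F. intertwiner \<theta> n \<rho> F \<and> F 0 = x}"
      using intertwiner_lincomb[of \<theta> n \<rho> F G 1 1] by auto
  next
    fix c x assume "x \<in> {x. \<exists>F. intertwiner \<theta> n \<rho> F \<and> F 0 = x}"
    then obtain F where "intertwiner \<theta> n \<rho> F" "F 0 = x" by auto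
    then show "c *\<^sub>R x \<in> {x. \<exists>F. intertwiner \<theta> n \<rho> F \<and> F 0 = x}"
      using intertwiner_lincomb[of \<theta> n \<rho> F F c 0] by auto
  qed
  show "\<exists>F. intertwiner \<theta> n \<rho> F \<and> F 0 = x" if "x \<in> base_points (n, \<rho>)" for x
    using that W_basis(3) by blast
qed

lemma base_points_independent:
  assumes r: "(n, \<rho>) \<in> Rt"
  shows "inj_on (\<lambda>i. W_basis i (n, \<rho>) 0) (isotypic_indices (n, \<rho>))" "independent (base_points (n, \<rho>))"
proof -
  let ?I = "isotypic_indices (n, \<rho>)"
  have n: "0 < n" using Rt_dim_pos[OF r] .
  have no_relation: "\<forall>i\<in>?I. c i = 0" if c: "(\<Sum>i\<in>?I. c i *\<^sub>R W_basis i (n, \<rho>) 0) = 0" for c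
  proof -
    define w where "w = (\<lambda>i. if i \<in> ?I then c i *\<^sub>R W_basis i (n, \<rho>) 0 else 0)"
    have "\<forall>i<k. w i \<in> W i"
      unfolding w_def using W_basis_mem[OF _ n] W_subspace by (auto intro: subspace_scale subspace_0)
    moreover have "\<forall>i\<ge>k. w i = 0" unfolding w_def isotypic_indices_def by auto
    moreover have "(\<Sum>i<k. w i) = (\<Sum>i\<in>?I. c i *\<^sub>R W_basis i (n, \<rho>) 0)"
      unfolding w_def by (rule sum.mono_neutral_cong_right) (auto simp: isotypic_indices_def)
    ultimately have "W_component 0 = w" using c by (intro W_component_unique) auto
    then have "w = (\<lambda>_. 0)" by (simp add: W_component_zero)
    then have "c i *\<^sub>R W_basis i (n, \<rho>) 0 = 0" if "i \<in> ?I" for i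
      using that unfolding w_def by (metis (mono_tags))
    then show ?thesis using W_basis_nonzero[OF _ n] by simp
  qed
  show "inj_on (\<lambda>i. W_basis i (n, \<rho>) 0) ?I" "independent (base_points (n, \<rho>))"
    using no_relation_imp_inj_on[where y="\<lambda>i. W_basis i (n, \<rho>) 0", OF finite_isotypic_indices no_relation]
      no_relation_imp_independent[where y="\<lambda>i. W_basis i (n, \<rho>) 0", OF finite_isotypic_indices no_relation]
    by auto
qed

text \<open>Intertwiners are determined by their base point, and by Schur orthogonality their
  inner products are those of the base points; so an orthonormal family of \<open>card E\<close> base points
  in the span of \<open>base_points\<close> yields orthonormal copies of \<open>\<rho>\<close> in \<open>\<real>^d\<close>.\<close>
lemma orthonormal_intertwiners_exist:
  assumes r: "(n, \<rho>) \<in> Rt" and E: "finite E" "card E \<le> rep_multiplicity \<theta> k W (n, \<rho>)"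
  shows "\<exists>F. (\<forall>e\<in>E. intertwiner \<theta> n \<rho> (F e)) \<and>
     (\<forall>e\<in>E. \<forall>e'\<in>E. \<forall>b<n. \<forall>b'<n. F e b \<bullet> F e' b' = (if e = e' \<and> b = b' then 1 else 0))"
proof -
  obtain B where B: "B \<subseteq> span (base_points (n, \<rho>))" "pairwise orthogonal B" "\<And>x. x \<in> B \<Longrightarrow> norm x = 1"
    "independent B" "card B = dim (span (base_points (n, \<rho>)))"
    by (rule orthonormal_basis_subspace[OF subspace_span[of "base_points (n, \<rho>)"]]) blast
  have "card B = card (isotypic_indices (n, \<rho>))"
    using B(5) dim_span_eq_card_independent[OF base_points_independent(2)[OF r]]
      card_image[OF base_points_independent(1)[OF r]] by simp
  then obtain g where g: "g ` E \<subseteq> B" "inj_on g E"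
    using card_le_inj[OF E(1) finiteI_independent[OF B(4)]] E(2) card_isotypic_indices by auto
  have gg: "g e \<bullet> g e' = (if e = e' then 1 else 0)" if "e \<in> E" "e' \<in> E" for e e'
  proof (cases "e = e'")
    case True
    then show ?thesis using B(3) g that by (auto simp: norm_eq_1)
  next
    case False
    then have "g e \<noteq> g e'" using g(2) that by (auto simp: inj_on_def)
    then show ?thesis using B(2) g that False unfolding pairwise_def orthogonal_def by auto
  qed
  have "\<forall>e\<in>E. \<exists>F. intertwiner \<theta> n \<rho> F \<and> F 0 = g e"
    using intertwiner_through_base_point g B(1) by blast
  then obtain F where F: "\<And>e. e \<in> E \<Longrightarrow> intertwiner \<theta> n \<rho> (F e) \<and> F e 0 = g e"
    by (metis bchoice)
  show ?thesis
  proof (intro exI conjI ballI allI impI)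
    show "intertwiner \<theta> n \<rho> (F e)" if "e \<in> E" for e using F that by blast
    show "F e b \<bullet> F e' b' = (if e = e' \<and> b = b' then 1 else 0)"
      if "e \<in> E" "e' \<in> E" "b < n" "b' < n" for e e' b b'
      using intertwiner_inner[OF r F[OF that(1), THEN conjunct1] F[OF that(2), THEN conjunct1] that(3,4)]
        F[OF that(1)] F[OF that(2)] gg[OF that(1,2)] by auto
  qed
qed

section \<open>The rank bound\<close>

lemma gram_in_LapGamma: "q \<in> Ctheta \<theta> \<Longrightarrow> gram q \<in> LapGamma"
proof -
  assume "q \<in> Ctheta \<theta>"
  then have c: "compatible \<theta> q" and s: "(\<Sum>i\<in>UNIV. q i) = 0" unfolding Ctheta_def by auto
  have "(\<Sum>i\<in>UNIV. \<Sum>j\<in>UNIV. x i * gram q i j * x j) = (\<Sum>i\<in>UNIV. x i *\<^sub>R q i) \<bullet> (\<Sum>j\<in>UNIV. x j *\<^sub>R q j)"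
    for x
    unfolding gram_def inner_sum_left by (simp add: inner_sum_right sum_distrib_left mult_ac)
  moreover have "(\<Sum>j\<in>UNIV. gram q i j) = 0" for i
    unfolding gram_def using s by (simp add: inner_sum_right[symmetric])
  moreover have "gram q (\<alpha>, u) (\<beta>, v) = gram q (\<gamma> + \<alpha>, u) (\<gamma> + \<beta>, v)" for \<alpha> \<beta> \<gamma> u v
    unfolding gram_def using c unfolding compatible_def by (metis inner_theta)
  ultimately show ?thesis unfolding LapGamma_def by (auto simp: gram_def inner_commute)
qed

definition isotypic_average :: "('g \<Rightarrow> nat \<Rightarrow> nat \<Rightarrow> real) \<Rightarrow> nat \<Rightarrow> real^'d \<Rightarrow> nat \<Rightarrow> real^'d" where
  "isotypic_average \<rho> b p = (\<lambda>b'. \<Sum>\<alpha>\<in>UNIV. \<rho> \<alpha> b' b *\<^sub>R (\<theta> \<alpha> *v p))"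

lemma isotypic_average_intertwiner:
  assumes r: "(n, \<rho>) \<in> Rt" and b: "b < n"
  shows "intertwiner \<theta> n \<rho> (isotypic_average \<rho> b p)"
  unfolding intertwiner_def
proof (intro allI impI)
  fix \<delta> b' assume b': "b' < n"
  have "\<theta> \<delta> *v isotypic_average \<rho> b p b' = (\<Sum>\<alpha>\<in>UNIV. \<rho> (- \<delta> + \<alpha>) b' b *\<^sub>R (\<theta> \<alpha> *v p))"
    using sum_UNIV_add_left[of "\<lambda>\<alpha>. \<rho> (- \<delta> + \<alpha>) b' b *\<^sub>R (\<theta> \<alpha> *v p)" \<delta>]
    by (simp add: isotypic_average_def matrix_vector_linear_simps theta_add add.assoc[symmetric])
  also have "\<dots> = (\<Sum>\<alpha>\<in>UNIV. \<Sum>b''<n. \<rho> \<delta> b'' b' *\<^sub>R (\<rho> \<alpha> b'' b *\<^sub>R (\<theta> \<alpha> *v p)))"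
  proof (rule sum.cong[OF refl])
    fix \<alpha>
    have "\<rho> (- \<delta> + \<alpha>) b' b = (\<Sum>b''<n. \<rho> \<delta> b'' b' * \<rho> \<alpha> b'' b)"
      using orth_rep_add[OF Rt_orth_rep[OF r] b' b] orth_rep_uminus[OF Rt_orth_rep[OF r] b'] by simp
    then show "\<rho> (- \<delta> + \<alpha>) b' b *\<^sub>R (\<theta> \<alpha> *v p) = (\<Sum>b''<n. \<rho> \<delta> b'' b' *\<^sub>R (\<rho> \<alpha> b'' b *\<^sub>R (\<theta> \<alpha> *v p)))"
      by (simp add: scaleR_sum_left)
  qed
  also have "\<dots> = (\<Sum>b''<n. \<rho> \<delta> b'' b' *\<^sub>R isotypic_average \<rho> b p b'')"
    unfolding isotypic_average_def by (subst sum.swap) (simp add: scaleR_sum_right)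
  finally show "\<theta> \<delta> *v isotypic_average \<rho> b p b' = (\<Sum>b''<n. \<rho> \<delta> b'' b' *\<^sub>R isotypic_average \<rho> b p b'')" .
qed

lemma Psi_config_eq:
  assumes q: "compatible \<theta> q" and r: "(n, \<rho>) \<in> Rt" and b: "b < n"
  shows "Psi_config Z q (((n, \<rho>), 0, b), u) = (\<Sum>b'<n. Z 0 ((n, \<rho>), 0, b') *\<^sub>R isotypic_average \<rho> b (q (0, u)) b')"
proof -
  have "Psi_config Z q (((n, \<rho>), 0, b), u)
      = (\<Sum>\<alpha>\<in>UNIV. \<Sum>b'<n. Z 0 ((n, \<rho>), 0, b') *\<^sub>R (\<rho> \<alpha> b' b *\<^sub>R (\<theta> \<alpha> *v q (0, u))))"
    unfolding Psi_config_def prod.case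
  proof (rule sum.cong[OF refl])
    fix \<alpha>
    show "Z \<alpha> ((n, \<rho>), 0, b) *\<^sub>R q (\<alpha>, u) = (\<Sum>b'<n. Z 0 ((n, \<rho>), 0, b') *\<^sub>R (\<rho> \<alpha> b' b *\<^sub>R (\<theta> \<alpha> *v q (0, u))))"
      using Z_translate_zero[OF r Rt_dim_pos[OF r] b, of \<alpha>] compatible_eq[OF q, of \<alpha> u]
      by (simp add: scaleR_sum_left)
  qed
  also have "\<dots> = (\<Sum>b'<n. Z 0 ((n, \<rho>), 0, b') *\<^sub>R isotypic_average \<rho> b (q (0, u)) b')"
    unfolding isotypic_average_def by (subst sum.swap) (simp add: scaleR_sum_right)
  finally show ?thesis .
qed

text \<open>The vectors spanning the column space of the block \<open>X\<^sub>\<rho>\<close> lie in the span of one vector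
  for each copy of \<open>\<rho>\<close> in \<open>\<theta>\<close>.\<close>
lemma Psi_config_in_span:
  assumes q: "compatible \<theta> q" and r: "(n, \<rho>) \<in> Rt" and b: "b < n"
  shows "Psi_config Z q (((n, \<rho>), 0, b), u)
    \<in> span ((\<lambda>i. \<Sum>b'<n. Z 0 ((n, \<rho>), 0, b') *\<^sub>R W_basis i (n, \<rho>) b') ` isotypic_indices (n, \<rho>))"
proof -
  obtain c where c: "\<forall>b'<n. isotypic_average \<rho> b (q (0, u)) b'
      = (\<Sum>i\<in>isotypic_indices (n, \<rho>). c i *\<^sub>R W_basis i (n, \<rho>) b')"
    using intertwiner_decomposition[OF r isotypic_average_intertwiner[OF r b]] by blast
  have "Psi_config Z q (((n, \<rho>), 0, b), u)
      = (\<Sum>i\<in>isotypic_indices (n, \<rho>). c i *\<^sub>R (\<Sum>b'<n. Z 0 ((n, \<rho>), 0, b') *\<^sub>R W_basis i (n, \<rho>) b'))"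
    unfolding Psi_config_eq[OF q r b] using c
    by (simp add: scaleR_sum_right sum.swap[of _ "isotypic_indices _"] mult.commute)
  also have "\<dots> \<in> span ((\<lambda>i. \<Sum>b'<n. Z 0 ((n, \<rho>), 0, b') *\<^sub>R W_basis i (n, \<rho>) b') ` isotypic_indices (n, \<rho>))"
    by (intro span_sum span_mul span_base) auto
  finally show ?thesis .
qed

lemma mat_rank_Xblock_le:
  assumes q: "compatible \<theta> (q :: 'g \<times> 'v::finite \<Rightarrow> real^'d)" and r: "r \<in> Rt"
  shows "mat_rank ({..<fst r} \<times> UNIV) ({..<fst r} \<times> UNIV) (Xblock (Psi Z (gram q)) r)
    \<le> rep_multiplicity \<theta> k W r"
proof -
  obtain n \<rho> where r_eq: "r = (n, \<rho>)" by (cases r)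
  let ?A = "(\<lambda>i. \<Sum>b'<n. Z 0 ((n, \<rho>), 0, b') *\<^sub>R W_basis i (n, \<rho>) b') ` isotypic_indices (n, \<rho>)"
  have "mat_rank ({..<fst r} \<times> UNIV) ({..<fst r} \<times> UNIV) (Xblock (Psi Z (gram q)) r)
      = dim ((\<lambda>(b, u). Psi_config Z q (((n, \<rho>), 0, b), u)) ` ({..<n} \<times> (UNIV :: 'v set)))"
    unfolding r_eq Psi_gram by (simp add: mat_rank_Xblock_gram)
  also have "\<dots> \<le> card ?A"
    using Psi_config_in_span[OF q r[unfolded r_eq]]
    by (intro dim_le_card) (auto simp: finite_isotypic_indices)
  also have "\<dots> \<le> rep_multiplicity \<theta> k W r"
    using card_image_le[OF finite_isotypic_indices] card_isotypic_indices r_eq by metis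
  finally show ?thesis .
qed

section \<open>Realising Gram matrices of admissible rank\<close>

definition orthonormal_intertwiners ::
    "(nat \<times> ('g \<Rightarrow> nat \<Rightarrow> nat \<Rightarrow> real) \<Rightarrow> 'e set) \<Rightarrow> (nat \<times> ('g \<Rightarrow> nat \<Rightarrow> nat \<Rightarrow> real) \<Rightarrow> 'e \<Rightarrow> nat \<Rightarrow> real^'d) \<Rightarrow> bool"
  where "orthonormal_intertwiners E F \<longleftrightarrow> (\<forall>r\<in>Rt. finite (E r) \<and>
    (\<forall>e\<in>E r. intertwiner \<theta> (fst r) (snd r) (F r e)) \<and>
    (\<forall>e\<in>E r. \<forall>e'\<in>E r. \<forall>b<fst r. \<forall>b'<fst r. F r e b \<bullet> F r e' b' = (if e = e' \<and> b = b' then 1 else 0)))"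

definition intertwiner_combination ::
    "(nat \<times> ('g \<Rightarrow> nat \<Rightarrow> nat \<Rightarrow> real) \<Rightarrow> 'e set) \<Rightarrow> (nat \<times> ('g \<Rightarrow> nat \<Rightarrow> nat \<Rightarrow> real) \<Rightarrow> 'e \<Rightarrow> nat \<Rightarrow> real^'d)
      \<Rightarrow> (nat \<times> ('g \<Rightarrow> nat \<Rightarrow> nat \<Rightarrow> real) \<Rightarrow> 'e \<Rightarrow> nat \<Rightarrow> real) \<Rightarrow> real^'d"
  where "intertwiner_combination E F c = (\<Sum>s\<in>Rt. \<Sum>e\<in>E s. \<Sum>b<fst s. c s e b *\<^sub>R F s e b)"

lemma inner_theta_orthonormal_intertwiners:
  assumes F: "orthonormal_intertwiners E F"
    and s: "s \<in> Rt" "s' \<in> Rt" "e \<in> E s" "e' \<in> E s'" "b < fst s" "b' < fst s'"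
  shows "F s e b \<bullet> (\<theta> \<gamma> *v F s' e' b') = (if s = s' \<and> e = e' then snd s \<gamma> b b' else 0)"
proof -
  have int: "intertwiner \<theta> (fst s) (snd s) (F s e)" "intertwiner \<theta> (fst s') (snd s') (F s' e')"
    using F s unfolding orthonormal_intertwiners_def by auto
  then have "F s e b \<bullet> (\<theta> \<gamma> *v F s' e' b') = (\<Sum>l<fst s'. snd s' \<gamma> l b' * (F s e b \<bullet> F s' e' l))"
    using s(6) by (simp add: intertwiner_def inner_sum_right)
  also have "\<dots> = (if s = s' \<and> e = e' then snd s \<gamma> b b' else 0)"
  proof (cases "s = s'")
    case False
    then have "F s e b \<bullet> F s' e' l = 0" if "l < fst s'" for l
      using intertwiner_inner_distinct[of "fst s" "snd s" "fst s'" "snd s'"] int s that by auto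
    then show ?thesis using False by simp
  next
    case True
    then have "(\<Sum>l<fst s'. snd s' \<gamma> l b' * (F s e b \<bullet> F s' e' l))
        = (\<Sum>l<fst s. if l = b then (if e = e' then snd s \<gamma> b b' else 0) else 0)"
      using F s unfolding orthonormal_intertwiners_def by (intro sum.cong refl) auto
    then show ?thesis using True s by simp
  qed
  finally show ?thesis .
qed

lemma inner_theta_intertwiner_combination:
  assumes F: "orthonormal_intertwiners E F"
  shows "intertwiner_combination E F c \<bullet> (\<theta> \<gamma> *v intertwiner_combination E F c')
    = (\<Sum>s\<in>Rt. \<Sum>e\<in>E s. \<Sum>b<fst s. \<Sum>b'<fst s. c s e b * c' s e b' * snd s \<gamma> b b')"
proof -
  have "F s e b \<bullet> (\<theta> \<gamma> *v intertwiner_combination E F c') = (\<Sum>b'<fst s. c' s e b' * snd s \<gamma> b b')"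
    if s: "s \<in> Rt" "e \<in> E s" "b < fst s" for s e b
  proof -
    have "F s e b \<bullet> (\<theta> \<gamma> *v intertwiner_combination E F c')
        = (\<Sum>s'\<in>Rt. \<Sum>e'\<in>E s'. \<Sum>b'<fst s'. c' s' e' b' * (F s e b \<bullet> (\<theta> \<gamma> *v F s' e' b')))"
      by (simp add: intertwiner_combination_def matrix_vector_linear_simps inner_sum_right)
    also have "\<dots> = (\<Sum>s'\<in>Rt. \<Sum>e'\<in>E s'. \<Sum>b'<fst s'. c' s' e' b' * (if s = s' \<and> e = e' then snd s \<gamma> b b' else 0))"
      using inner_theta_orthonormal_intertwiners[OF F] s by (intro sum.cong refl) auto
    also have "\<dots> = (\<Sum>b'<fst s. c' s e b' * snd s \<gamma> b b')"
      using F s finite_Rt unfolding orthonormal_intertwiners_def by (intro sum_collapse_diagonal) auto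
    finally show ?thesis .
  qed
  then show ?thesis
    unfolding intertwiner_combination_def[of E F c]
    by (simp add: inner_sum_left sum_distrib_left mult.assoc)
qed

lemma Fourier_inner_theta_intertwiner_combination:
  assumes F: "orthonormal_intertwiners E F" and r: "(n, \<rho>) \<in> Rt" and b: "b < n" "b' < n"
  shows "(\<Sum>\<gamma>\<in>UNIV. \<rho> \<gamma> b b' * (intertwiner_combination E F c \<bullet> (\<theta> \<gamma> *v intertwiner_combination E F c')))
    = schur_const \<rho> * (\<Sum>e\<in>E (n, \<rho>). c (n, \<rho>) e b * c' (n, \<rho>) e b')"
proof -
  have coeff: "(\<Sum>\<gamma>\<in>UNIV. \<rho> \<gamma> b b' * (c s e l * c' s e l' * snd s \<gamma> l l'))
      = c s e l * c' s e l' * (if (n, \<rho>) = s \<and> b = l \<and> b' = l' then schur_const \<rho> else 0)"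
    if "s \<in> Rt" "l \<in> {..<fst s}" "l' \<in> {..<fst s}" for s e l l'
  proof -
    have "(\<Sum>\<gamma>\<in>UNIV. \<rho> \<gamma> b b' * snd s \<gamma> l l') = (if (n, \<rho>) = s \<and> b = l \<and> b' = l' then schur_const \<rho> else 0)"
      using schur_orthogonality[OF r, of "fst s" "snd s" b b' l l'] b that by simp
    moreover have "(\<Sum>\<gamma>\<in>UNIV. \<rho> \<gamma> b b' * (c s e l * c' s e l' * snd s \<gamma> l l'))
        = c s e l * c' s e l' * (\<Sum>\<gamma>\<in>UNIV. \<rho> \<gamma> b b' * snd s \<gamma> l l')"
      by (simp add: sum_distrib_left mult_ac)
    ultimately show ?thesis by simp
  qed
  have "(\<Sum>\<gamma>\<in>UNIV. \<rho> \<gamma> b b' * (intertwiner_combination E F c \<bullet> (\<theta> \<gamma> *v intertwiner_combination E F c')))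
      = (\<Sum>s\<in>Rt. \<Sum>e\<in>E s. \<Sum>l<fst s. \<Sum>l'<fst s. \<Sum>\<gamma>\<in>UNIV. \<rho> \<gamma> b b' * (c s e l * c' s e l' * snd s \<gamma> l l'))"
    unfolding inner_theta_intertwiner_combination[OF F] sum_distrib_left by (rule sum_swap_inner4)
  also have "\<dots> = (\<Sum>s\<in>Rt. \<Sum>e\<in>E s. \<Sum>l<fst s. \<Sum>l'<fst s.
      c s e l * c' s e l' * (if (n, \<rho>) = s \<and> b = l \<and> b' = l' then schur_const \<rho> else 0))"
    using coeff by (intro sum.cong refl) auto
  also have "\<dots> = (\<Sum>s\<in>Rt. if s = (n, \<rho>) then (\<Sum>e\<in>E s. \<Sum>l<fst s. \<Sum>l'<fst s.
      if b = l \<and> b' = l' then c s e l * c' s e l' * schur_const \<rho> else 0) else 0)"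
    by (intro sum.cong refl) (auto intro!: sum.cong)
  finally show ?thesis using r b finite_Rt by (simp add: sum_sum_delta sum_distrib_left mult_ac)
qed

lemma sum_theta_intertwiner_combination:
  assumes F: "orthonormal_intertwiners E F" and \<tau>: "(1, \<tau>) \<in> Rt" "\<forall>\<gamma>. \<tau> \<gamma> 0 0 = 1"
  shows "(\<Sum>\<alpha>\<in>UNIV. \<theta> \<alpha> *v intertwiner_combination E F c)
    = (\<Sum>e\<in>E (1, \<tau>). (real CARD('g) * c (1, \<tau>) e 0) *\<^sub>R F (1, \<tau>) e 0)"
proof -
  have orbit_sum: "(\<Sum>\<alpha>\<in>UNIV. \<theta> \<alpha> *v F s e b) = (if s = (1, \<tau>) then real CARD('g) *\<^sub>R F s e b else 0)"
    if s: "s \<in> Rt" "e \<in> E s" "b \<in> {..<fst s}" for s e b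
  proof -
    obtain n \<rho> where s_eq: "s = (n, \<rho>)" by (cases s)
    have "(\<Sum>\<alpha>\<in>UNIV. \<theta> \<alpha> *v F s e b) = (\<Sum>\<alpha>\<in>UNIV. \<Sum>b'<n. \<rho> \<alpha> b' b *\<^sub>R F s e b')"
      using F s unfolding orthonormal_intertwiners_def intertwiner_def s_eq by simp
    also have "\<dots> = (\<Sum>b'<n. (\<Sum>\<alpha>\<in>UNIV. \<rho> \<alpha> b' b * \<tau> \<alpha> 0 0) *\<^sub>R F s e b')"
      using \<tau>(2) by (subst sum.swap) (simp add: scaleR_sum_left)
    also have "\<dots> = (\<Sum>b'<n. if s = (1, \<tau>) \<and> b' = b then real CARD('g) *\<^sub>R F s e b else 0)"
      using schur_orthogonality[OF _ \<tau>(1), of n \<rho> _ b 0 0] s \<tau>(2) unfolding s_eq schur_const_def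
      by (intro sum.cong refl) auto
    also have "\<dots> = (if s = (1, \<tau>) then real CARD('g) *\<^sub>R F s e b else 0)"
      using s unfolding s_eq by (cases "(n, \<rho>) = (1, \<tau>)") auto
    finally show ?thesis .
  qed
  have "(\<Sum>\<alpha>\<in>UNIV. \<theta> \<alpha> *v intertwiner_combination E F c)
      = (\<Sum>s\<in>Rt. \<Sum>e\<in>E s. \<Sum>b<fst s. \<Sum>\<alpha>\<in>UNIV. c s e b *\<^sub>R (\<theta> \<alpha> *v F s e b))"
    unfolding intertwiner_combination_def matrix_vector_linear_simps by (rule sum_swap_inner3)
  also have "\<dots> = (\<Sum>s\<in>Rt. \<Sum>e\<in>E s. \<Sum>b<fst s. if s = (1, \<tau>) then (real CARD('g) * c s e b) *\<^sub>R F s e b else 0)"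
    using orbit_sum by (intro sum.cong refl) (simp add: scaleR_sum_right[symmetric])
  also have "\<dots> = (\<Sum>s\<in>Rt. if s = (1, \<tau>) then (\<Sum>e\<in>E s. \<Sum>b<fst s. (real CARD('g) * c s e b) *\<^sub>R F s e b) else 0)"
    by (intro sum.cong refl) auto
  finally show ?thesis using \<tau>(1) finite_Rt by simp
qed

lemma orthonormal_intertwiners_family_exist:
  assumes "\<And>r. r \<in> Rt \<Longrightarrow> finite (E r) \<and> card (E r) \<le> rep_multiplicity \<theta> k W r"
  shows "\<exists>F. orthonormal_intertwiners E F"
proof -
  have "\<forall>r\<in>Rt. \<exists>G. (\<forall>e\<in>E r. intertwiner \<theta> (fst r) (snd r) (G e)) \<and>
      (\<forall>e\<in>E r. \<forall>e'\<in>E r. \<forall>b<fst r. \<forall>b'<fst r. G e b \<bullet> G e' b' = (if e = e' \<and> b = b' then 1 else 0))"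
    using orthonormal_intertwiners_exist assms by fastforce
  then obtain F where "\<forall>r\<in>Rt. (\<forall>e\<in>E r. intertwiner \<theta> (fst r) (snd r) (F r e)) \<and>
      (\<forall>e\<in>E r. \<forall>e'\<in>E r. \<forall>b<fst r. \<forall>b'<fst r. F r e b \<bullet> F r e' b' = (if e = e' \<and> b = b' then 1 else 0))"
    by (metis bchoice)
  then show ?thesis using assms unfolding orthonormal_intertwiners_def by blast
qed

definition orbit_config :: "('v \<Rightarrow> real^'d) \<Rightarrow> 'g \<times> 'v \<Rightarrow> real^'d" where
  "orbit_config p = (\<lambda>(\<alpha>, u). \<theta> \<alpha> *v p u)"

lemma compatible_orbit_config: "compatible \<theta> (orbit_config p)"
  unfolding compatible_def orbit_config_def by (simp add: theta_add)

lemma gram_orbit_config: "gram (orbit_config p) (0, u) (\<gamma>, w) = p u \<bullet> (\<theta> \<gamma> *v p w)"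
  unfolding gram_def orbit_config_def by (simp add: theta_zero)

lemma sum_orbit_config:
  assumes F: "orthonormal_intertwiners E F" and \<tau>: "(1, \<tau>) \<in> Rt" "\<forall>\<gamma>. \<tau> \<gamma> 0 0 = 1"
    and c: "\<And>e. e \<in> E (1, \<tau>) \<Longrightarrow> (\<Sum>u\<in>UNIV. c (1, \<tau>) e 0 u) = 0"
  shows "(\<Sum>i\<in>UNIV. orbit_config (\<lambda>u. intertwiner_combination E F (\<lambda>r e b. c r e b u)) i) = 0"
proof -
  let ?p = "\<lambda>u. intertwiner_combination E F (\<lambda>r e b. c r e b u)"
  have "(\<Sum>i\<in>UNIV. orbit_config ?p i) = (\<Sum>\<alpha>\<in>UNIV. \<Sum>u\<in>UNIV. \<theta> \<alpha> *v ?p u)"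
    unfolding orbit_config_def
    by (simp add: sum.cartesian_product UNIV_Times_UNIV[symmetric] del: UNIV_Times_UNIV)
  also have "\<dots> = (\<Sum>u\<in>UNIV. \<Sum>\<alpha>\<in>UNIV. \<theta> \<alpha> *v ?p u)"
    by (rule sum.swap)
  also have "\<dots> = (\<Sum>e\<in>E (1, \<tau>). (real CARD('g) * (\<Sum>u\<in>UNIV. c (1, \<tau>) e 0 u)) *\<^sub>R F (1, \<tau>) e 0)"
    unfolding sum_theta_intertwiner_combination[OF F \<tau>]
    by (subst sum.swap) (simp add: scaleR_sum_left sum_distrib_left)
  finally show ?thesis using c by simp
qed

text \<open>The factor \<open>1 / sqrt (schur_const \<rho>)\<close> in the coefficients compensates the constant in the
  Schur orthogonality relations, so that the orbit configuration has the Fourier coefficients of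
  \<open>L\<close>.\<close>
lemma gram_realisable:
  fixes L :: "'g \<times> 'v::finite \<Rightarrow> 'g \<times> 'v \<Rightarrow> real"
  assumes L: "L \<in> LapGamma"
    and rank: "\<forall>r\<in>Rt. mat_rank ({..<fst r} \<times> UNIV) ({..<fst r} \<times> UNIV) (Xblock (Psi Z L) r)
      \<le> rep_multiplicity \<theta> k W r"
  shows "\<exists>q \<in> Ctheta \<theta>. gram q = L"
proof -
  obtain y :: "'g \<times> 'v \<Rightarrow> real^('g \<times> 'v)" where y: "L = gram y"
    using LapGamma_gram[OF L] by blast
  define Y where "Y = (\<lambda>r b u. Psi_config Z y ((r, 0, b), u))"
  define V where "V = (\<lambda>r. (\<lambda>(b, u). Y r b u) ` ({..<fst r} \<times> (UNIV :: 'v set)))"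
  obtain E where E: "\<And>r. pairwise orthogonal (E r)" "\<And>r x. x \<in> E r \<Longrightarrow> norm x = 1"
    "\<And>r. independent (E r)" "\<And>r. card (E r) = dim (V r)" "\<And>r. span (E r) = span (V r)"
    using orthonormal_bases_exist[of V] by metis
  have "dim (V r) \<le> rep_multiplicity \<theta> k W r" if "r \<in> Rt" for r
    using rank that unfolding y Psi_gram V_def Y_def by (simp add: mat_rank_Xblock_gram)
  then obtain F where F: "orthonormal_intertwiners E F"
    using orthonormal_intertwiners_family_exist E(3,4) finiteI_independent by metis
  obtain \<tau> where \<tau>: "(1, \<tau>) \<in> Rt" "\<forall>\<gamma>. \<tau> \<gamma> 0 0 = 1" using trivial_rep_in_Rt by blast
  define c where "c = (\<lambda>r e b u. (Y r b u \<bullet> e) / sqrt (schur_const (snd r)))"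
  define q where "q = orbit_config (\<lambda>u. intertwiner_combination E F (\<lambda>r e b. c r e b u))"
  have "(\<Sum>u\<in>UNIV. c (1, \<tau>) e 0 u) = 0" for e
  proof -
    have "(\<Sum>j\<in>UNIV. L i j) = 0" for i using L unfolding LapGamma_def by blast
    then have "(\<Sum>i\<in>UNIV. y i) = 0" unfolding y by (rule gram_row_sums_zero)
    then have "(\<Sum>u\<in>UNIV. Y (1, \<tau>) 0 u) = 0"
      unfolding Y_def sum_Psi_config_trivial_block[OF \<tau>] by simp
    then show ?thesis by (simp add: c_def sum_divide_distrib[symmetric] inner_sum_left[symmetric])
  qed
  then have "q \<in> Ctheta \<theta>"
    using sum_orbit_config[OF F \<tau>, of c] compatible_orbit_config unfolding Ctheta_def q_def by blast
  moreover have "gram q = L"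
  proof (rule translation_invariant_eqI)
    show "translation_invariant (gram q)" "translation_invariant L"
      using LapGamma_translation_invariant gram_in_LapGamma \<open>q \<in> Ctheta \<theta>\<close> L by blast+
    fix n \<rho> b b' u w assume r: "(n, \<rho>) \<in> Rt" and b: "b < n" "b' < n"
    have "finite (E (n, \<rho>))" using E(3) finiteI_independent by blast
    moreover have "Y (n, \<rho>) b' w \<in> span (E (n, \<rho>))"
      using b E(5) unfolding V_def by (auto intro: span_base)
    ultimately have Y_inner: "Y (n, \<rho>) b u \<bullet> Y (n, \<rho>) b' w
        = schur_const \<rho> * (\<Sum>e\<in>E (n, \<rho>). c (n, \<rho>) e b u * c (n, \<rho>) e b' w)"
      using inner_orthonormal_basis[OF E(1,2)] schur_const_pos[OF r]
      by (simp add: c_def sum_distrib_left field_simps)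
    have "(\<Sum>\<gamma>\<in>UNIV. \<rho> \<gamma> b b' * gram q (0, u) (\<gamma>, w))
        = schur_const \<rho> * (\<Sum>e\<in>E (n, \<rho>). c (n, \<rho>) e b u * c (n, \<rho>) e b' w)"
      using Fourier_inner_theta_intertwiner_combination[OF F r b] by (simp add: q_def gram_orbit_config)
    also have "\<dots> = Psi Z L (((n, \<rho>), 0, b), u) (((n, \<rho>), 0, b'), w)"
      unfolding Y_inner[symmetric] y Psi_gram Y_def by (simp add: gram_def)
    also have "\<dots> = (\<Sum>\<gamma>\<in>UNIV. \<rho> \<gamma> b b' * L (0, u) (\<gamma>, w))"
      by (rule Psi_block_translation_invariant[OF LapGamma_translation_invariant[OF L] r b])
    finally show "(\<Sum>\<gamma>\<in>UNIV. \<rho> \<gamma> b b' * gram q (0, u) (\<gamma>, w)) = (\<Sum>\<gamma>\<in>UNIV. \<rho> \<gamma> b b' * L (0, u) (\<gamma>, w))" .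
  qed
  ultimately show ?thesis by blast
qed

end

theorem proposition4p6:
  fixes \<theta> :: "'g::{finite,group_add} \<Rightarrow> real^'d^'d"
    and Rt :: "(nat \<times> ('g \<Rightarrow> nat \<Rightarrow> nat \<Rightarrow> real)) set"
    and Z :: "'g \<Rightarrow> ((nat \<times> ('g \<Rightarrow> nat \<Rightarrow> nat \<Rightarrow> real)) \<times> nat \<times> nat) \<Rightarrow> real"
    and k :: nat and W :: "nat \<Rightarrow> (real^'d) set"
  assumes "abs_irred_group TYPE('g)"
    and "point_group \<theta>"
    and "irrep_reps Rt"
    and "decomp_matrix Rt Z"
    and "irred_decomp \<theta> k W"
  shows "(\<lambda>q :: 'g \<times> 'v::finite \<Rightarrow> real^'d. Psi Z (gram q)) ` Ctheta \<theta> =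
    {X \<in> (Kset Z :: (((nat \<times> ('g \<Rightarrow> nat \<Rightarrow> nat \<Rightarrow> real)) \<times> nat \<times> nat) \<times> 'v
                      \<Rightarrow> ((nat \<times> ('g \<Rightarrow> nat \<Rightarrow> nat \<Rightarrow> real)) \<times> nat \<times> nat) \<times> 'v \<Rightarrow> real) set).
       \<forall>r\<in>Rt. mat_rank ({..<fst r} \<times> UNIV) ({..<fst r} \<times> UNIV) (Xblock X r)
               \<le> rep_multiplicity \<theta> k W r}"
proof -
  interpret point_group_decomposition Rt Z \<theta> k W
    using assms(2-5) by unfold_locales
  show ?thesis (is "?configs = ?blocks")
  proof (intro equalityI subsetI)
    fix X assume "X \<in> ?configs"
    then obtain q where q: "q \<in> Ctheta \<theta>" "X = Psi Z (gram q)" by blast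
    then show "X \<in> ?blocks"
      using gram_in_LapGamma[OF q(1)] mat_rank_Xblock_le[of q] unfolding Kset_def Ctheta_def by blast
  next
    fix X assume "X \<in> ?blocks"
    then obtain L where "L \<in> LapGamma" "X = Psi Z L"
      "\<forall>r\<in>Rt. mat_rank ({..<fst r} \<times> UNIV) ({..<fst r} \<times> UNIV) (Xblock (Psi Z L) r) \<le> rep_multiplicity \<theta> k W r"
      unfolding Kset_def by blast
    with gram_realisable obtain q where "q \<in> Ctheta \<theta>" "gram q = L" by blast
    then show "X \<in> ?configs" using \<open>X = Psi Z L\<close> by blast
  qed
qed

end
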